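(* Let $R$ be a separative regular ring in which $2$ is invertible. Then every $a\in R$ satisfying $Rar(a^2)=\ell(a^2)aR=R(1-a^2)R$ is special clean, i.e., there exists an idempotent $e\in R$ such that $a-e$ is a unit of $R$ and $aR\cap eR=0$.
   Context: All rings are associative with identity; modules are right modules. $R$ is regular if every $x\in R$ satisfies $x=xyx$ for some $y\in R$. $R$ is separative if for all finitely generated projective right $R$-modules $A,B$: $A\oplus A\cong A\oplus B\cong B\oplus B$ implies $A\cong B$. For $x\in R$, $r(x)=\{y\in R: xy=0\}$ and $\ell(x)=\{y\in R: yx=0\}$. $Rar(a^2)$, $\ell(a^2)aR$, $R(1-a^2)R$ denote the two-sided ideals generated by $ar(a^2)=\{ay:y\in r(a^2)\}$, $\ell(a^2)a$, and $1-a^2$ respectively. *)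

theory Defs
  imports Main
begin

(* Matrices over R: functions nat => nat => 'a; only entries with row index < rows and
   column index < cols are relevant. *)

definition mat_mul :: "nat \<Rightarrow> (nat \<Rightarrow> nat \<Rightarrow> 'a::ring_1) \<Rightarrow> (nat \<Rightarrow> nat \<Rightarrow> 'a) \<Rightarrow> nat \<Rightarrow> nat \<Rightarrow> 'a"
  where "mat_mul k A B = (\<lambda>i j. \<Sum>l<k. A i l * B l j)"

definition mat_eq :: "nat \<Rightarrow> nat \<Rightarrow> (nat \<Rightarrow> nat \<Rightarrow> 'a) \<Rightarrow> (nat \<Rightarrow> nat \<Rightarrow> 'a) \<Rightarrow> bool"
  where "mat_eq p q A B = (\<forall>i<p. \<forall>j<q. A i j = B i j)"

definition idem_mat :: "nat \<Rightarrow> (nat \<Rightarrow> nat \<Rightarrow> 'a::ring_1) \<Rightarrow> bool"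
  where "idem_mat n E = mat_eq n n (mat_mul n E E) E"

(* The f.g. projective right modules E R^n and F R^m are isomorphic:
   there are X (m x n), Y (n x m) with X = F X E, Y = E Y F, Y X = E, X Y = F. *)
definition mat_iso :: "nat \<Rightarrow> (nat \<Rightarrow> nat \<Rightarrow> 'a::ring_1) \<Rightarrow> nat \<Rightarrow> (nat \<Rightarrow> nat \<Rightarrow> 'a) \<Rightarrow> bool"
  where "mat_iso n E m F = (\<exists>X Y.
      mat_eq m n (mat_mul m F (mat_mul n X E)) X \<and>
      mat_eq n m (mat_mul n E (mat_mul m Y F)) Y \<and>
      mat_eq n n (mat_mul m Y X) E \<and>
      mat_eq m m (mat_mul n X Y) F)"

(* block diagonal diag(E,F) with E of size n: corresponds to the direct sum *)
definition block_diag :: "nat \<Rightarrow> (nat \<Rightarrow> nat \<Rightarrow> 'a::zero) \<Rightarrow> (nat \<Rightarrow> nat \<Rightarrow> 'a) \<Rightarrow> nat \<Rightarrow> nat \<Rightarrow> 'a"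
  where "block_diag n E F = (\<lambda>i j. if i < n \<and> j < n then E i j
                                  else if n \<le> i \<and> n \<le> j then F (i - n) (j - n) else 0)"

(* Every f.g. projective right R-module is isomorphic to E R^n for an idempotent
   n x n matrix E; direct sums correspond to block diagonal matrices. *)
definition separative :: "'a::ring_1 itself \<Rightarrow> bool"
  where "separative _ = (\<forall>n m (E::nat \<Rightarrow> nat \<Rightarrow> 'a) F.
      idem_mat n E \<and> idem_mat m F \<and>
      mat_iso (n + n) (block_diag n E E) (n + m) (block_diag n E F) \<and>
      mat_iso (n + m) (block_diag n E F) (m + m) (block_diag m F F)
      \<longrightarrow> mat_iso n E m F)"

definition regular_ring :: "'a::ring_1 itself \<Rightarrow> bool"
  where "regular_ring _ = (\<forall>x::'a. \<exists>y. x = x * y * x)"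

definition unit_elem :: "'a::ring_1 \<Rightarrow> bool"
  where "unit_elem u = (\<exists>v. u * v = 1 \<and> v * u = 1)"

definition idempotent :: "'a::ring_1 \<Rightarrow> bool"
  where "idempotent e = (e * e = e)"

definition r_ann :: "'a::ring_1 \<Rightarrow> 'a set" where "r_ann x = {y. x * y = 0}"
definition l_ann :: "'a::ring_1 \<Rightarrow> 'a set" where "l_ann x = {y. y * x = 0}"

definition tsideal_gen :: "'a::ring_1 set \<Rightarrow> 'a set"
  where "tsideal_gen S = {x. \<exists>(k::nat) r s t. (\<forall>i<k. s i \<in> S) \<and> x = (\<Sum>i<k. r i * s i * t i)}"

definition special_clean :: "'a::ring_1 \<Rightarrow> bool"
  where "special_clean a = (\<exists>e. idempotent e \<and> unit_elem (a - e) \<and>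
            {a * r | r. True} \<inter> {e * r | r. True} = {0})"

end

theory Submission
  imports Defs
begin

text \<open>
  Since \<open>2\<close> is invertible, \<open>a\<close> is an involution \<open>u\<close> modulo the ideal generated by \<open>1 - a\<^sup>2\<close>;
  regularity produces an idempotent \<open>g\<close> in that ideal, commuting with \<open>u\<close>, such that
  \<open>a (1 - g) = u (1 - g)\<close>. Everything then happens in the regular corner \<open>g R g\<close>. Let \<open>e1 R\<close> be the
  image of \<open>a_in = g a g\<close>, \<open>w0 R\<close> its intersection with the kernel \<open>(w0 + f1) R\<close>, and put
  \<open>t = e1 - w0\<close>, \<open>y0 = g - e1 - f1\<close>. Then \<open>a_in\<close> maps \<open>(t + y0) R\<close> isomorphically onto
  \<open>(t + w0) R\<close>, and the hypotheses on the ideals place \<open>t\<close> in both \<open>R w0 R\<close> and \<open>R y0 R\<close>.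
  Separativity cancels \<open>t R\<close>, so \<open>y0 R \<cong> w0 R\<close>, say via \<open>s\<close> and \<open>s'\<close>; then \<open>e = s' + w0 + f1\<close> is
  an idempotent with \<open>a - e\<close> a unit and \<open>a R \<inter> e R = 0\<close>.\<close>

lemma mult_assoc_eq: "x * y = z \<Longrightarrow> x * (y * w) = z * (w::'a::semigroup_mult)"
  by (metis mult.assoc)

section \<open>Finitely generated projective modules as idempotent matrices\<close>

definition zero_mat :: "nat \<Rightarrow> nat \<Rightarrow> 'a::zero" where
  "zero_mat = (\<lambda>i j. 0)"

definition mat_add :: "(nat \<Rightarrow> nat \<Rightarrow> 'a::plus) \<Rightarrow> (nat \<Rightarrow> nat \<Rightarrow> 'a) \<Rightarrow> nat \<Rightarrow> nat \<Rightarrow> 'a" where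
  "mat_add A B = (\<lambda>i j. A i j + B i j)"

definition block_mat :: "nat \<Rightarrow> nat \<Rightarrow> (nat \<Rightarrow> nat \<Rightarrow> 'a) \<Rightarrow> (nat \<Rightarrow> nat \<Rightarrow> 'a) \<Rightarrow>
    (nat \<Rightarrow> nat \<Rightarrow> 'a) \<Rightarrow> (nat \<Rightarrow> nat \<Rightarrow> 'a) \<Rightarrow> nat \<Rightarrow> nat \<Rightarrow> 'a" where
  "block_mat r c A B C D = (\<lambda>i j. if i < r then (if j < c then A i j else B i (j - c))
                                  else (if j < c then C (i - r) j else D (i - r) (j - c)))"

lemma sum_lessThan_add:
  fixes m n :: nat
  shows "(\<Sum>l<m + n. f l) = (\<Sum>l<m. f l) + (\<Sum>l<n. f (m + l))"
  by (induct n) (auto simp: add.assoc)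

lemma mat_mul_assoc: "mat_mul k A (mat_mul l B C) = mat_mul l (mat_mul k A B) C"
  unfolding mat_mul_def
  by (auto simp: fun_eq_iff sum_distrib_left sum_distrib_right mult.assoc intro: sum.swap)

lemma mat_mul_block_mat:
  "mat_mul (c + c') (block_mat r c A B C D) (block_mat c s A' B' C' D') =
   block_mat r s (mat_add (mat_mul c A A') (mat_mul c' B C')) (mat_add (mat_mul c A B') (mat_mul c' B D'))
     (mat_add (mat_mul c C A') (mat_mul c' D C')) (mat_add (mat_mul c C B') (mat_mul c' D D'))"
  unfolding mat_mul_def block_mat_def mat_add_def
  by (auto simp: fun_eq_iff sum_lessThan_add)

lemma mat_mul_zero_mat [simp]:
  "mat_mul k zero_mat A = zero_mat" "mat_mul k A zero_mat = zero_mat" "mat_mul 0 A B = zero_mat"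
  by (auto simp: mat_mul_def zero_mat_def fun_eq_iff)

lemma mat_add_zero_mat [simp]:
  fixes A :: "nat \<Rightarrow> nat \<Rightarrow> 'a::monoid_add"
  shows "mat_add A zero_mat = A" "mat_add zero_mat A = A"
  by (auto simp: mat_add_def zero_mat_def fun_eq_iff)

lemma block_diag_eq_block_mat: "block_diag n E F = block_mat n n E zero_mat zero_mat F"
  by (auto simp: block_diag_def block_mat_def zero_mat_def fun_eq_iff)

lemma block_diag_assoc: "block_diag (n + m) (block_diag n E F) G = block_diag n E (block_diag m F G)"
  by (auto simp: block_diag_def fun_eq_iff)

lemma block_diag_0: "block_diag 0 E F = F"
  by (auto simp: block_diag_def fun_eq_iff)

text \<open>
  \<open>mat_eq\<close> only compares entries inside a rectangle; matrices that vanish outside it are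
  determined by those entries, so for them isomorphism can be stated with plain equations.\<close>

definition supported :: "nat \<Rightarrow> nat \<Rightarrow> (nat \<Rightarrow> nat \<Rightarrow> 'a::zero) \<Rightarrow> bool" where
  "supported p q A \<longleftrightarrow> (\<forall>i j. p \<le> i \<or> q \<le> j \<longrightarrow> A i j = 0)"

definition idem_square :: "nat \<Rightarrow> (nat \<Rightarrow> nat \<Rightarrow> 'a::ring_1) \<Rightarrow> bool" where
  "idem_square n E \<longleftrightarrow> supported n n E \<and> mat_mul n E E = E"

definition idem_iso :: "nat \<Rightarrow> (nat \<Rightarrow> nat \<Rightarrow> 'a::ring_1) \<Rightarrow> nat \<Rightarrow> (nat \<Rightarrow> nat \<Rightarrow> 'a) \<Rightarrow> bool" where
  "idem_iso n E m F \<longleftrightarrow>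
     (\<exists>X Y. mat_mul n X E = X \<and> mat_mul m Y F = Y \<and> mat_mul m Y X = E \<and> mat_mul n X Y = F)"

lemma supported_eqI: "supported p q A \<Longrightarrow> supported p q B \<Longrightarrow> mat_eq p q A B \<Longrightarrow> A = B"
  unfolding supported_def mat_eq_def fun_eq_iff by (metis linorder_not_le)

lemma mat_eq_mat_mul:
  "mat_eq p k A A' \<Longrightarrow> mat_eq k q B B' \<Longrightarrow> mat_eq p q (mat_mul k A B) (mat_mul k A' B')"
  unfolding mat_eq_def mat_mul_def by simp

lemma mat_eq_trans: "mat_eq p q A B \<Longrightarrow> mat_eq p q B C \<Longrightarrow> mat_eq p q A C"
  by (simp add: mat_eq_def)

lemma idem_iso_imp_mat_iso:
  assumes "idem_iso n E m F"
  shows "mat_iso n E m F"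
proof -
  obtain X Y where XY: "mat_mul n X E = X" "mat_mul m Y F = Y" "mat_mul m Y X = E" "mat_mul n X Y = F"
    using assms unfolding idem_iso_def by blast
  have "mat_mul m F X = X" "mat_mul n E Y = Y"
    by (metis XY mat_mul_assoc)+
  with XY show ?thesis
    unfolding mat_iso_def mat_eq_def by (intro exI[of _ X] exI[of _ Y]) simp
qed

lemma mat_iso_imp_idem_iso:
  assumes E: "idem_square n E" and F: "idem_square m F" and "mat_iso n E m F"
  shows "idem_iso n E m F"
proof -
  obtain X Y where XY: "mat_eq m n (mat_mul m F (mat_mul n X E)) X"
      "mat_eq n m (mat_mul n E (mat_mul m Y F)) Y"
      "mat_eq n n (mat_mul m Y X) E" "mat_eq m m (mat_mul n X Y) F"
    using assms(3) unfolding mat_iso_def by blast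
  define X' where "X' = mat_mul m F (mat_mul n X E)"
  define Y' where "Y' = mat_mul n E (mat_mul m Y F)"
  have EE: "mat_mul n E E = E" and FF: "mat_mul m F F = F"
    and sE: "supported n n E" and sF: "supported m m F"
    using E F by (auto simp: idem_square_def)
  have "supported m n X'" "supported n m Y'"
    unfolding X'_def Y'_def using sE sF by (auto simp: supported_def mat_mul_def)
  then have sYX: "supported n n (mat_mul m Y' X')" and sXY: "supported m m (mat_mul n X' Y')"
    by (auto simp: supported_def mat_mul_def)
  have "mat_mul n X' E = X'"
    unfolding X'_def by (metis EE mat_mul_assoc)
  moreover have "mat_mul m Y' F = Y'"
    unfolding Y'_def by (metis FF mat_mul_assoc)
  moreover have "mat_mul m Y' X' = E"
    by (rule supported_eqI[OF sYX sE])
      (metis XY(1,2,3) X'_def Y'_def mat_eq_mat_mul mat_eq_trans)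
  moreover have "mat_mul n X' Y' = F"
    by (rule supported_eqI[OF sXY sF])
      (metis XY(1,2,4) X'_def Y'_def mat_eq_mat_mul mat_eq_trans)
  ultimately show ?thesis
    unfolding idem_iso_def by blast
qed

lemma idem_iso_refl: "idem_square n E \<Longrightarrow> idem_iso n E n E"
  unfolding idem_iso_def idem_square_def by blast

lemma idem_iso_sym: "idem_iso n E m F \<Longrightarrow> idem_iso m F n E"
  unfolding idem_iso_def by blast

lemma idem_iso_trans:
  assumes "idem_iso n E m F" and "idem_iso m F k G"
  shows "idem_iso n E k G"
proof -
  obtain X Y where XY: "mat_mul n X E = X" "mat_mul m Y F = Y" "mat_mul m Y X = E" "mat_mul n X Y = F"
    using assms(1) unfolding idem_iso_def by blast
  obtain X' Y' where XY': "mat_mul m X' F = X'" "mat_mul k Y' G = Y'" "mat_mul k Y' X' = F" "mat_mul m X' Y' = G"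
    using assms(2) unfolding idem_iso_def by blast
  have FX: "mat_mul m F X = X" and FY': "mat_mul m F Y' = Y'"
    by (metis XY XY' mat_mul_assoc)+
  show ?thesis
    unfolding idem_iso_def
  proof (intro exI conjI)
    show "mat_mul n (mat_mul m X' X) E = mat_mul m X' X"
      by (metis XY(1) mat_mul_assoc)
    show "mat_mul k (mat_mul m Y Y') G = mat_mul m Y Y'"
      by (metis XY'(2) mat_mul_assoc)
    show "mat_mul k (mat_mul m Y Y') (mat_mul m X' X) = E"
      by (metis FX XY'(3) XY(3) mat_mul_assoc)
    show "mat_mul n (mat_mul m X' X) (mat_mul m Y Y') = G"
      by (metis FY' XY'(4) XY(4) mat_mul_assoc)
  qed
qed

lemma idem_iso_block_diag:
  assumes "idem_iso n E m F" and "idem_iso n' E' m' F'"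
  shows "idem_iso (n + n') (block_diag n E E') (m + m') (block_diag m F F')"
proof -
  obtain X Y where "mat_mul n X E = X" "mat_mul m Y F = Y" "mat_mul m Y X = E" "mat_mul n X Y = F"
    using assms(1) unfolding idem_iso_def by blast
  moreover obtain X' Y' where
    "mat_mul n' X' E' = X'" "mat_mul m' Y' F' = Y'" "mat_mul m' Y' X' = E'" "mat_mul n' X' Y' = F'"
    using assms(2) unfolding idem_iso_def by blast
  ultimately show ?thesis
    unfolding idem_iso_def block_diag_eq_block_mat
    by (intro exI[of _ "block_mat m n X zero_mat zero_mat X'"] exI[of _ "block_mat n m Y zero_mat zero_mat Y'"])
      (simp add: mat_mul_block_mat)
qed

lemma idem_iso_block_diag_commute:
  assumes "idem_square n E" and "idem_square m F"
  shows "idem_iso (n + m) (block_diag n E F) (m + n) (block_diag m F E)"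
proof -
  have "mat_mul n E E = E" "mat_mul m F F = F"
    using assms by (auto simp: idem_square_def)
  then show ?thesis
    unfolding idem_iso_def block_diag_eq_block_mat
    by (intro exI[of _ "block_mat m n zero_mat F E zero_mat"] exI[of _ "block_mat n m zero_mat E F zero_mat"])
      (simp add: mat_mul_block_mat)
qed

lemma idem_square_block_diag:
  assumes "idem_square n E" and "idem_square m F"
  shows "idem_square (n + m) (block_diag n E F)"
proof -
  have "mat_mul n E E = E" "mat_mul m F F = F"
    using assms by (auto simp: idem_square_def)
  moreover have "supported (n + m) (n + m) (block_diag n E F)"
    using assms by (auto simp: idem_square_def supported_def block_diag_def)
  ultimately show ?thesis
    unfolding idem_square_def by (simp add: block_diag_eq_block_mat mat_mul_block_mat)
qed

text \<open>A pair \<open>(n, E)\<close> with \<open>idem_square n E\<close> stands for the module \<open>E R\<^sup>n\<close>.\<close>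

type_synonym 'a fgp = "nat \<times> (nat \<Rightarrow> nat \<Rightarrow> 'a)"

definition is_fgp :: "'a::ring_1 fgp \<Rightarrow> bool" where
  "is_fgp P \<longleftrightarrow> idem_square (fst P) (snd P)"

definition fgp_iso :: "'a::ring_1 fgp \<Rightarrow> 'a fgp \<Rightarrow> bool" (infix "\<simeq>" 50) where
  "P \<simeq> Q \<longleftrightarrow> idem_iso (fst P) (snd P) (fst Q) (snd Q)"

definition fgp_sum :: "'a::ring_1 fgp \<Rightarrow> 'a fgp \<Rightarrow> 'a fgp" (infixl "\<oplus>" 65) where
  "P \<oplus> Q = (fst P + fst Q, block_diag (fst P) (snd P) (snd Q))"

primrec fgp_multiple :: "nat \<Rightarrow> 'a::ring_1 fgp \<Rightarrow> 'a fgp" where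
  "fgp_multiple 0 P = (0, zero_mat)"
| "fgp_multiple (Suc k) P = fgp_multiple k P \<oplus> P"

lemma fgp_iso_refl: "is_fgp P \<Longrightarrow> P \<simeq> P"
  by (simp add: is_fgp_def fgp_iso_def idem_iso_refl)

lemma fgp_iso_sym: "P \<simeq> Q \<Longrightarrow> Q \<simeq> P"
  by (simp add: fgp_iso_def idem_iso_sym)

lemma fgp_iso_trans [trans]: "P \<simeq> Q \<Longrightarrow> Q \<simeq> S \<Longrightarrow> P \<simeq> S"
  unfolding fgp_iso_def by (rule idem_iso_trans)

lemma fgp_sum_iso: "P \<simeq> P' \<Longrightarrow> Q \<simeq> Q' \<Longrightarrow> P \<oplus> Q \<simeq> P' \<oplus> Q'"
  unfolding fgp_iso_def fgp_sum_def by (simp add: idem_iso_block_diag)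

lemma fgp_sum_commute: "is_fgp P \<Longrightarrow> is_fgp Q \<Longrightarrow> P \<oplus> Q \<simeq> Q \<oplus> P"
  unfolding fgp_iso_def fgp_sum_def is_fgp_def by (simp add: idem_iso_block_diag_commute)

lemma fgp_sum_assoc: "P \<oplus> Q \<oplus> S = P \<oplus> (Q \<oplus> S)"
  unfolding fgp_sum_def by (simp add: block_diag_assoc add.assoc)

lemma is_fgp_sum: "is_fgp P \<Longrightarrow> is_fgp Q \<Longrightarrow> is_fgp (P \<oplus> Q)"
  unfolding is_fgp_def fgp_sum_def by (simp add: idem_square_block_diag)

lemma is_fgp_multiple: "is_fgp P \<Longrightarrow> is_fgp (fgp_multiple k P)"
proof (induction k)
  case 0
  show ?case
    by (auto simp: is_fgp_def idem_square_def supported_def zero_mat_def)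
qed (simp add: is_fgp_sum)

lemma fgp_multiple_1 [simp]: "fgp_multiple 1 P = P"
  by (simp add: fgp_sum_def block_diag_0)

lemma fgp_iso_cancel_if_separative:
  assumes sep: "separative TYPE('a::ring_1)" and P: "is_fgp (P::'a fgp)" and Q: "is_fgp Q"
    and "P \<oplus> P \<simeq> P \<oplus> Q" and "P \<oplus> Q \<simeq> Q \<oplus> Q"
  shows "P \<simeq> Q"
proof -
  obtain n E m F where PQ: "P = (n, E)" "Q = (m, F)"
    by fastforce
  have "idem_square n E" "idem_square m F"
    using P Q PQ by (auto simp: is_fgp_def)
  moreover from this have "idem_mat n E" "idem_mat m F"
    by (auto simp: idem_square_def idem_mat_def mat_eq_def)
  moreover have "mat_iso (n + n) (block_diag n E E) (n + m) (block_diag n E F)"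
    "mat_iso (n + m) (block_diag n E F) (m + m) (block_diag m F F)"
    using assms(4,5) PQ by (auto simp: fgp_iso_def fgp_sum_def intro: idem_iso_imp_mat_iso)
  ultimately have "mat_iso n E m F"
    using sep unfolding separative_def by blast
  with \<open>idem_square n E\<close> \<open>idem_square m F\<close> PQ show ?thesis
    by (simp add: fgp_iso_def mat_iso_imp_idem_iso)
qed

lemma fgp_cancel_common_summand:
  assumes sep: "separative TYPE('a::ring_1)"
    and fgp: "is_fgp (P::'a fgp)" "is_fgp Q" "is_fgp S" "is_fgp X" "is_fgp Y"
    and iso: "P \<oplus> Q \<simeq> S \<oplus> Q" "P \<simeq> Q \<oplus> X" "S \<simeq> Q \<oplus> Y"
  shows "P \<simeq> S"
proof -
  have "P \<oplus> S \<simeq> P \<oplus> Q \<oplus> Y"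
    using fgp_sum_iso[OF fgp_iso_refl[OF fgp(1)] iso(3)] by (simp add: fgp_sum_assoc)
  also have "P \<oplus> Q \<oplus> Y \<simeq> S \<oplus> Q \<oplus> Y"
    by (rule fgp_sum_iso[OF iso(1) fgp_iso_refl[OF fgp(5)]])
  also have "S \<oplus> Q \<oplus> Y \<simeq> S \<oplus> S"
    using fgp_sum_iso[OF fgp_iso_refl[OF fgp(3)] fgp_iso_sym[OF iso(3)]] by (simp add: fgp_sum_assoc)
  finally have PS_SS: "P \<oplus> S \<simeq> S \<oplus> S" .
  have "P \<oplus> S \<simeq> S \<oplus> P"
    using fgp by (simp add: fgp_sum_commute)
  also have "S \<oplus> P \<simeq> S \<oplus> Q \<oplus> X"
    using fgp_sum_iso[OF fgp_iso_refl[OF fgp(3)] iso(2)] by (simp add: fgp_sum_assoc)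
  also have "S \<oplus> Q \<oplus> X \<simeq> P \<oplus> Q \<oplus> X"
    by (rule fgp_sum_iso[OF fgp_iso_sym[OF iso(1)] fgp_iso_refl[OF fgp(4)]])
  also have "P \<oplus> Q \<oplus> X \<simeq> P \<oplus> P"
    using fgp_sum_iso[OF fgp_iso_refl[OF fgp(1)] fgp_iso_sym[OF iso(2)]] by (simp add: fgp_sum_assoc)
  finally have "P \<oplus> S \<simeq> P \<oplus> P" .
  from fgp_iso_sym[OF this] PS_SS show ?thesis
    by (rule fgp_iso_cancel_if_separative[OF sep fgp(1,3)])
qed

lemma fgp_double_iso_of_multiple:
  assumes sep: "separative TYPE('a::ring_1)" and fgp: "is_fgp (A::'a fgp)" "is_fgp B"
  shows "fgp_multiple (j + 2) A \<simeq> B \<oplus> fgp_multiple (j + 1) A \<Longrightarrow> A \<oplus> A \<simeq> B \<oplus> A"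
proof (induction j)
  case 0
  then show ?case
    by (simp add: numeral_2_eq_2 fgp_multiple_1[simplified])
next
  case (Suc j)
  have fgp_mult: "\<And>k. is_fgp (fgp_multiple k A)"
    using fgp by (simp add: is_fgp_multiple)
  have "fgp_multiple (j + 2) A \<simeq> B \<oplus> fgp_multiple (j + 1) A"
  proof (rule fgp_cancel_common_summand[OF sep, of _ A _ "fgp_multiple (j + 1) A" "B \<oplus> fgp_multiple j A"])
    show "is_fgp (fgp_multiple (j + 2) A)" "is_fgp A" "is_fgp (B \<oplus> fgp_multiple (j + 1) A)"
      "is_fgp (fgp_multiple (j + 1) A)" "is_fgp (B \<oplus> fgp_multiple j A)"
      using fgp fgp_mult by (auto simp: is_fgp_sum)
    show "fgp_multiple (j + 2) A \<oplus> A \<simeq> B \<oplus> fgp_multiple (j + 1) A \<oplus> A"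
      using Suc.prems by (simp add: fgp_sum_assoc)
    show "fgp_multiple (j + 2) A \<simeq> A \<oplus> fgp_multiple (j + 1) A"
      using fgp_sum_commute[OF fgp_mult[of "Suc j"] fgp(1)] by simp
    have "B \<oplus> fgp_multiple j A \<oplus> A \<simeq> A \<oplus> (B \<oplus> fgp_multiple j A)"
      using fgp fgp_mult by (simp add: fgp_sum_commute is_fgp_sum)
    then show "B \<oplus> fgp_multiple (j + 1) A \<simeq> A \<oplus> (B \<oplus> fgp_multiple j A)"
      by (simp add: fgp_sum_assoc)
  qed
  then show ?case
    by (rule Suc.IH)
qed

lemma fgp_double_iso:
  assumes sep: "separative TYPE('a::ring_1)"
    and fgp: "is_fgp (A::'a fgp)" "is_fgp B" "is_fgp C" "is_fgp D"
    and iso: "A \<oplus> C \<simeq> B \<oplus> C" and multiple: "fgp_multiple n A \<simeq> C \<oplus> D"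
  shows "A \<oplus> A \<simeq> B \<oplus> A"
proof -
  have fgp_DA: "is_fgp (D \<oplus> A)"
    using fgp by (simp add: is_fgp_sum)
  have multiple': "fgp_multiple (Suc n) A \<simeq> C \<oplus> (D \<oplus> A)"
    using fgp_sum_iso[OF multiple fgp_iso_refl[OF fgp(1)]] by (simp add: fgp_sum_assoc)
  have "fgp_multiple (n + 2) A \<simeq> A \<oplus> fgp_multiple (Suc n) A"
    using fgp_sum_commute[OF is_fgp_multiple[OF fgp(1), of "Suc n"] fgp(1)] by simp
  also have "A \<oplus> fgp_multiple (Suc n) A \<simeq> A \<oplus> C \<oplus> (D \<oplus> A)"
    using fgp_sum_iso[OF fgp_iso_refl[OF fgp(1)] multiple'] by (simp add: fgp_sum_assoc)
  also have "A \<oplus> C \<oplus> (D \<oplus> A) \<simeq> B \<oplus> C \<oplus> (D \<oplus> A)"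
    by (rule fgp_sum_iso[OF iso fgp_iso_refl[OF fgp_DA]])
  also have "B \<oplus> C \<oplus> (D \<oplus> A) \<simeq> B \<oplus> fgp_multiple (n + 1) A"
    using fgp_sum_iso[OF fgp_iso_refl[OF fgp(2)] fgp_iso_sym[OF multiple']] by (simp add: fgp_sum_assoc)
  finally show ?thesis
    by (rule fgp_double_iso_of_multiple[OF sep fgp(1,2)])
qed

lemma separative_cancel:
  assumes sep: "separative TYPE('a::ring_1)"
    and fgp: "is_fgp (A::'a fgp)" "is_fgp B" "is_fgp C" "is_fgp D" "is_fgp D'"
    and iso: "C \<oplus> A \<simeq> C \<oplus> B"
    and multiples: "fgp_multiple n A \<simeq> C \<oplus> D" "fgp_multiple n' B \<simeq> C \<oplus> D'"
  shows "A \<simeq> B"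
proof -
  have "A \<oplus> C \<simeq> C \<oplus> A"
    using fgp by (simp add: fgp_sum_commute)
  also note iso
  also have "C \<oplus> B \<simeq> B \<oplus> C"
    using fgp by (simp add: fgp_sum_commute)
  finally have AC_BC: "A \<oplus> C \<simeq> B \<oplus> C" .
  have "A \<oplus> A \<simeq> B \<oplus> A"
    by (rule fgp_double_iso[OF sep fgp(1-4) AC_BC multiples(1)])
  also have "B \<oplus> A \<simeq> A \<oplus> B"
    using fgp by (simp add: fgp_sum_commute)
  finally have AA_AB: "A \<oplus> A \<simeq> A \<oplus> B" .
  have "B \<oplus> B \<simeq> A \<oplus> B"
    by (rule fgp_double_iso[OF sep fgp(2,1,3,5) fgp_iso_sym[OF AC_BC] multiples(2)])
  from AA_AB fgp_iso_sym[OF this] show ?thesis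
    by (rule fgp_iso_cancel_if_separative[OF sep fgp(1,2)])
qed

section \<open>Idempotents of the ring as projective modules\<close>

definition fgp_of_idem :: "'a::ring_1 \<Rightarrow> 'a fgp" where
  "fgp_of_idem e = (1, \<lambda>i j. if i = 0 \<and> j = 0 then e else 0)"

lemma is_fgp_of_idem: "e * e = e \<Longrightarrow> is_fgp (fgp_of_idem e)"
  by (auto simp: is_fgp_def idem_square_def supported_def fgp_of_idem_def fun_eq_iff mat_mul_def)

lemma fgp_of_idem_iso_iff:
  "fgp_of_idem e \<simeq> fgp_of_idem f \<longleftrightarrow> (\<exists>x y. x * e = x \<and> y * f = y \<and> y * x = e \<and> x * y = f)"
proof
  assume "fgp_of_idem e \<simeq> fgp_of_idem f"
  then obtain X Y where XY: "mat_mul 1 X (snd (fgp_of_idem e)) = X" "mat_mul 1 Y (snd (fgp_of_idem f)) = Y"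
    "mat_mul 1 Y X = snd (fgp_of_idem e)" "mat_mul 1 X Y = snd (fgp_of_idem f)"
    unfolding fgp_iso_def idem_iso_def fgp_of_idem_def by auto
  have "X 0 0 * e = X 0 0" "Y 0 0 * f = Y 0 0" "Y 0 0 * X 0 0 = e" "X 0 0 * Y 0 0 = f"
    using XY[THEN fun_cong, THEN fun_cong, of 0 0] by (simp_all add: mat_mul_def fgp_of_idem_def)
  then show "\<exists>x y. x * e = x \<and> y * f = y \<and> y * x = e \<and> x * y = f"
    by blast
next
  assume "\<exists>x y. x * e = x \<and> y * f = y \<and> y * x = e \<and> x * y = f"
  then obtain x y where "x * e = x" "y * f = y" "y * x = e" "x * y = f"
    by blast
  then show "fgp_of_idem e \<simeq> fgp_of_idem f"
    unfolding fgp_iso_def fgp_of_idem_def idem_iso_def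
    by (intro exI[of _ "\<lambda>i j. if i = 0 \<and> j = 0 then x else 0"] exI[of _ "\<lambda>i j. if i = 0 \<and> j = 0 then y else 0"])
      (auto simp: fun_eq_iff mat_mul_def)
qed

lemma fgp_of_idem_orthogonal_add:
  assumes "e * e = e" "f * f = f" "e * f = 0" "f * e = 0"
  shows "fgp_of_idem (e + f) \<simeq> fgp_of_idem e \<oplus> fgp_of_idem f"
  unfolding fgp_iso_def fgp_of_idem_def idem_iso_def fgp_sum_def
  by (intro exI[of _ "\<lambda>i j. if j = 0 then (if i = 0 then e else if i = 1 then f else 0) else 0"]
      exI[of _ "\<lambda>i j. if i = 0 then (if j = 0 then e else if j = 1 then f else 0) else 0"])
    (auto simp: fun_eq_iff mat_mul_def numeral_2_eq_2 block_diag_def assms distrib_left distrib_right)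

definition diag_mat :: "nat \<Rightarrow> 'a::ring_1 \<Rightarrow> nat \<Rightarrow> nat \<Rightarrow> 'a" where
  "diag_mat k e = (\<lambda>i j. if i = j \<and> i < k then e else 0)"

lemma fgp_multiple_of_idem: "fgp_multiple k (fgp_of_idem e) = (k, diag_mat k e)"
  by (induction k) (auto simp: fgp_of_idem_def diag_mat_def fgp_sum_def block_diag_def fun_eq_iff zero_mat_def)

lemma diag_mat_eq_block_mat: "diag_mat k e = block_mat k k (diag_mat k e) zero_mat zero_mat zero_mat"
  by (auto simp: diag_mat_def block_mat_def zero_mat_def fun_eq_iff)

lemma mat_mul_diag_mat_left: "mat_mul k (diag_mat k e) A i j = (if i < k then e * A i j else 0)"
proof -
  have "mat_mul k (diag_mat k e) A i j = (\<Sum>l<k. if l = i then e * A i j else 0)"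
    unfolding mat_mul_def diag_mat_def by (intro sum.cong) auto
  then show ?thesis
    by simp
qed

lemma mat_mul_diag_mat_right: "mat_mul k A (diag_mat k e) i j = (if j < k then A i j * e else 0)"
proof -
  have "mat_mul k A (diag_mat k e) i j = (\<Sum>l<k. if l = j then A i j * e else 0)"
    unfolding mat_mul_def diag_mat_def by (intro sum.cong) auto
  then show ?thesis
    by simp
qed

lemma mat_mul_diff_left:
  "mat_mul k (\<lambda>i j. A i j - B i j) C = (\<lambda>i j. mat_mul k A C i j - mat_mul k B C i j)"
  by (auto simp: fun_eq_iff mat_mul_def left_diff_distrib sum_subtractf)

lemma mat_mul_diff_right:
  "mat_mul k C (\<lambda>i j. A i j - B i j) = (\<lambda>i j. mat_mul k C A i j - mat_mul k C B i j)"
  by (auto simp: fun_eq_iff mat_mul_def right_diff_distrib sum_subtractf)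

lemma sum_if_const: "(\<Sum>l\<in>A. if C then f l else 0) = (if C then sum f A else 0)"
  by simp

text \<open>
  The column \<open>s\<close> and the row \<open>p\<close> are mutually inverse maps \<open>c R \<rightarrow> (e R)\<^sup>k \<rightarrow> c R\<close>, so \<open>c R\<close> is
  isomorphic to the image of the idempotent \<open>P = s p\<close> and \<open>(e R)\<^sup>k\<close> splits as \<open>P \<oplus> (diag e - P)\<close>.\<close>

context
  fixes e c :: "'a::ring_1" and s p :: "nat \<Rightarrow> 'a" and k :: nat
  assumes ee: "e * e = e" and cc: "c * c = c"
    and es: "\<And>i. e * s i = s i" and sc: "\<And>i. s i * c = s i"
    and cp: "\<And>j. c * p j = p j" and pe: "\<And>j. p j * e = p j"
    and ps: "(\<Sum>l<k. p l * s l) = c"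
begin

definition "span_P = (\<lambda>i j. if i < k \<and> j < k then s i * p j else 0)"
definition "span_Q = (\<lambda>i j. diag_mat k e i j - span_P i j)"
definition "span_col = (\<lambda>i j. if j = 0 \<and> i < k then s i else 0)"
definition "span_row = (\<lambda>i j. if i = 0 \<and> j < k then p j else 0)"

lemma span_P_idem: "mat_mul k span_P span_P = span_P"
proof (intro ext)
  fix i j
  have "mat_mul k span_P span_P i j = (\<Sum>l<k. if i < k \<and> j < k then s i * (p l * s l) * p j else 0)"
    unfolding mat_mul_def span_P_def by (intro sum.cong) (auto simp: mult.assoc)
  also have "\<dots> = (if i < k \<and> j < k then s i * (\<Sum>l<k. p l * s l) * p j else 0)"
    by (simp only: sum_if_const sum_distrib_left sum_distrib_right)
  also have "\<dots> = span_P i j"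
    by (simp add: ps span_P_def mult.assoc cp)
  finally show "mat_mul k span_P span_P i j = span_P i j" .
qed

lemma diag_span_P: "mat_mul k (diag_mat k e) span_P = span_P"
  by (auto simp: fun_eq_iff mat_mul_diag_mat_left span_P_def mult.assoc[symmetric] es)

lemma span_P_diag: "mat_mul k span_P (diag_mat k e) = span_P"
  by (auto simp: fun_eq_iff mat_mul_diag_mat_right span_P_def mult.assoc pe)

lemma diag_idem: "mat_mul k (diag_mat k e) (diag_mat k e) = diag_mat k e"
  by (intro ext, simp only: mat_mul_diag_mat_right) (auto simp: diag_mat_def ee)

lemma span_Q_idem: "mat_mul k span_Q span_Q = span_Q"
  unfolding span_Q_def mat_mul_diff_left mat_mul_diff_right
  by (simp add: span_P_idem diag_span_P span_P_diag diag_idem)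

lemma span_Q_diag: "mat_mul k span_Q (diag_mat k e) = span_Q"
  unfolding span_Q_def mat_mul_diff_left by (simp add: span_P_diag diag_idem)

lemma span_row_diag: "mat_mul k span_row (diag_mat k e) = span_row"
  by (auto simp: fun_eq_iff mat_mul_diag_mat_right span_row_def pe)

lemma span_col_c: "mat_mul 1 span_col (snd (fgp_of_idem c)) = span_col"
  by (auto simp: fun_eq_iff mat_mul_def span_col_def fgp_of_idem_def sc)

lemma span_row_col: "mat_mul k span_row span_col = snd (fgp_of_idem c)"
proof (intro ext)
  fix i j
  have "mat_mul k span_row span_col i j = (\<Sum>l<k. if i = 0 \<and> j = 0 then p l * s l else 0)"
    unfolding mat_mul_def span_row_def span_col_def by (intro sum.cong) auto
  then show "mat_mul k span_row span_col i j = snd (fgp_of_idem c) i j"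
    by (simp add: ps fgp_of_idem_def)
qed

lemma span_row_P: "mat_mul k span_row span_P = span_row"
proof (intro ext)
  fix i j
  have "mat_mul k span_row span_P i j = (\<Sum>l<k. if i = 0 \<and> j < k then (p l * s l) * p j else 0)"
    unfolding mat_mul_def span_row_def span_P_def by (intro sum.cong) (auto simp: mult.assoc)
  also have "\<dots> = (if i = 0 \<and> j < k then (\<Sum>l<k. p l * s l) * p j else 0)"
    by (simp only: sum_if_const sum_distrib_right)
  finally show "mat_mul k span_row span_P i j = span_row i j"
    by (simp add: ps cp span_row_def)
qed

lemma span_P_col: "mat_mul k span_P span_col = span_col"
proof (intro ext)
  fix i j
  have "mat_mul k span_P span_col i j = (\<Sum>l<k. if i < k \<and> j = 0 then s i * (p l * s l) else 0)"
    unfolding mat_mul_def span_col_def span_P_def by (intro sum.cong) (auto simp: mult.assoc)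
  also have "\<dots> = (if i < k \<and> j = 0 then s i * (\<Sum>l<k. p l * s l) else 0)"
    by (simp only: sum_if_const sum_distrib_left)
  finally show "mat_mul k span_P span_col i j = span_col i j"
    by (simp add: ps sc span_col_def)
qed

lemma span_row_Q: "mat_mul k span_row span_Q = zero_mat"
  unfolding span_Q_def mat_mul_diff_right span_row_P
  by (auto simp: fun_eq_iff mat_mul_diag_mat_right span_row_def zero_mat_def pe)

lemma span_Q_col: "mat_mul k span_Q span_col = zero_mat"
  unfolding span_Q_def mat_mul_diff_left span_P_col
  by (auto simp: fun_eq_iff mat_mul_diag_mat_left span_col_def zero_mat_def es)

lemma span_col_row: "mat_add (mat_mul 1 span_col span_row) span_Q = diag_mat k e"
  by (auto simp: fun_eq_iff mat_add_def mat_mul_def span_col_def span_row_def span_Q_def span_P_def diag_mat_def)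

lemma is_fgp_span_Q: "is_fgp (k, span_Q)"
  using span_Q_idem
  by (auto simp: is_fgp_def idem_square_def supported_def span_Q_def span_P_def diag_mat_def)

lemma fgp_multiple_iso_span: "fgp_multiple k (fgp_of_idem e) \<simeq> fgp_of_idem c \<oplus> (k, span_Q)"
proof -
  have c: "snd (fgp_of_idem c) = block_mat 1 1 (snd (fgp_of_idem c)) zero_mat zero_mat zero_mat"
    by (auto simp: fgp_of_idem_def block_mat_def zero_mat_def fun_eq_iff)
  define X where "X = block_mat 1 k span_row zero_mat span_Q zero_mat"
  define Y where "Y = block_mat k 1 span_col span_Q zero_mat zero_mat"
  have "mat_mul k X (diag_mat k e) = X"
    using mat_mul_block_mat[of k 0 1 span_row zero_mat span_Q zero_mat k "diag_mat k e"
      zero_mat zero_mat zero_mat] diag_mat_eq_block_mat[of k e]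
    by (simp add: X_def span_row_diag span_Q_diag)
  moreover have "mat_mul (1 + k) Y (block_mat 1 1 (snd (fgp_of_idem c)) zero_mat zero_mat span_Q) = Y"
    using mat_mul_block_mat[of 1 k k span_col span_Q zero_mat zero_mat 1 "snd (fgp_of_idem c)"
      zero_mat zero_mat span_Q]
    by (simp add: Y_def span_col_c span_Q_idem del: One_nat_def)
  moreover have "mat_mul (1 + k) Y X = diag_mat k e"
    using mat_mul_block_mat[of 1 k k span_col span_Q zero_mat zero_mat k span_row zero_mat span_Q zero_mat]
      diag_mat_eq_block_mat[of k e]
    by (simp add: X_def Y_def span_Q_idem span_col_row del: One_nat_def)
  moreover have "mat_mul k X Y = block_mat 1 1 (snd (fgp_of_idem c)) zero_mat zero_mat span_Q"
    using mat_mul_block_mat[of k 0 1 span_row zero_mat span_Q zero_mat 1 span_col span_Q zero_mat zero_mat]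
    by (simp add: X_def Y_def span_row_col span_row_Q span_Q_col span_Q_idem)
  ultimately show ?thesis
    unfolding fgp_multiple_of_idem fgp_iso_def idem_iso_def fgp_sum_def
    by (intro exI[of _ X] exI[of _ Y]) (simp add: fgp_of_idem_def block_diag_eq_block_mat del: One_nat_def)
qed
end

lemma fgp_multiple_iso_of_ideal_idem:
  assumes ee: "e * e = e" and cc: "c * c = (c::'a::ring_1)" and c: "c = (\<Sum>i<k. r i * e * t i)"
  shows "\<exists>D. is_fgp D \<and> fgp_multiple k (fgp_of_idem e) \<simeq> fgp_of_idem c \<oplus> D"
proof -
  define s where "s i = e * t i * c" for i
  define p where "p j = c * r j * e" for j
  have "(\<Sum>l<k. p l * s l) = c * (\<Sum>i<k. r i * e * t i) * c"
    unfolding p_def s_def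
    by (simp add: sum_distrib_left sum_distrib_right mult.assoc mult_assoc_eq[OF ee])
  then have ps: "(\<Sum>l<k. p l * s l) = c"
    using cc c by (simp add: mult.assoc)
  have "e * s i = s i" "s i * c = s i" "c * p i = p i" "p i * e = p i" for i
    unfolding s_def p_def using ee cc by (simp_all add: mult.assoc mult_assoc_eq[OF ee] mult_assoc_eq[OF cc])
  with is_fgp_span_Q[OF ee cc _ _ _ _ ps] fgp_multiple_iso_span[OF ee cc _ _ _ _ ps] show ?thesis
    by blast
qed

text \<open>In module terms: \<open>t R \<oplus> y R \<cong> t R \<oplus> w R\<close> with \<open>t \<in> R y R \<inter> R w R\<close> implies \<open>y R \<cong> w R\<close>.\<close>

lemma separative_idem_cancel:
  assumes sep: "separative TYPE('a::ring_1)"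
    and tt: "t * t = (t::'a)" and yy: "y * y = y" and ww: "w * w = w"
    and ty: "t * y = 0" and yt: "y * t = 0" and tw: "t * w = 0" and wt: "w * t = 0"
    and iso: "X * (t + y) = X" "Y * (t + w) = Y" "Y * X = t + y" "X * Y = t + w"
    and t_y: "t = (\<Sum>i<(k::nat). r i * y * s i)" and t_w: "t = (\<Sum>i<(k'::nat). r' i * w * s' i)"
  shows "\<exists>x z. x * y = x \<and> z * w = z \<and> z * x = y \<and> x * z = w"
proof -
  obtain D where D: "is_fgp D" "fgp_multiple k (fgp_of_idem y) \<simeq> fgp_of_idem t \<oplus> D"
    using fgp_multiple_iso_of_ideal_idem[OF yy tt t_y] by blast
  obtain D' where D': "is_fgp D'" "fgp_multiple k' (fgp_of_idem w) \<simeq> fgp_of_idem t \<oplus> D'"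
    using fgp_multiple_iso_of_ideal_idem[OF ww tt t_w] by blast
  have "fgp_of_idem t \<oplus> fgp_of_idem y \<simeq> fgp_of_idem (t + y)"
    by (rule fgp_iso_sym[OF fgp_of_idem_orthogonal_add[OF tt yy ty yt]])
  also have "fgp_of_idem (t + y) \<simeq> fgp_of_idem (t + w)"
    using iso by (auto simp: fgp_of_idem_iso_iff)
  also have "fgp_of_idem (t + w) \<simeq> fgp_of_idem t \<oplus> fgp_of_idem w"
    by (rule fgp_of_idem_orthogonal_add[OF tt ww tw wt])
  finally have "fgp_of_idem y \<simeq> fgp_of_idem w"
    by (rule separative_cancel[OF sep is_fgp_of_idem[OF yy] is_fgp_of_idem[OF ww] is_fgp_of_idem[OF tt]
          D(1) D'(1) _ D(2) D'(2)])
  then show ?thesis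
    by (simp add: fgp_of_idem_iso_iff)
qed

section \<open>Ideals, regularity and the element \<open>1 - a\<^sup>2\<close>\<close>

lemma tsideal_gen_mem: "s \<in> S \<Longrightarrow> (s::'a::ring_1) \<in> tsideal_gen S"
  unfolding tsideal_gen_def by (intro CollectI exI[of _ 1] exI[of _ "\<lambda>_. 1"] exI[of _ "\<lambda>_. s"]) simp

lemma tsideal_gen_add:
  assumes "x \<in> tsideal_gen S" and "y \<in> tsideal_gen S"
  shows "(x::'a::ring_1) + y \<in> tsideal_gen S"
proof -
  obtain k :: nat and r s t where x: "\<forall>i<k. s i \<in> S" "x = (\<Sum>i<k. r i * s i * t i)"
    using assms(1) unfolding tsideal_gen_def by auto
  obtain k' :: nat and r' s' t' where y: "\<forall>i<k'. s' i \<in> S" "y = (\<Sum>i<k'. r' i * s' i * t' i)"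
    using assms(2) unfolding tsideal_gen_def by auto
  define glue :: "(nat \<Rightarrow> 'a) \<Rightarrow> (nat \<Rightarrow> 'a) \<Rightarrow> nat \<Rightarrow> 'a"
    where "glue f f' i = (if i < k then f i else f' (i - k))" for f f' i
  have "\<forall>i<k + k'. glue s s' i \<in> S"
    using x y unfolding glue_def by auto
  moreover have "x + y = (\<Sum>i<k + k'. glue r r' i * glue s s' i * glue t t' i)"
    unfolding sum_lessThan_add x y glue_def by simp
  ultimately show ?thesis
    unfolding tsideal_gen_def by (intro CollectI exI conjI)
qed

lemma tsideal_gen_mult_left:
  assumes "x \<in> tsideal_gen S"
  shows "(y::'a::ring_1) * x \<in> tsideal_gen S"
proof -
  obtain k :: nat and r s t where x: "\<forall>i<k. s i \<in> S" "x = (\<Sum>i<k. r i * s i * t i)"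
    using assms unfolding tsideal_gen_def by auto
  then have "y * x = (\<Sum>i<k. (y * r i) * s i * t i)"
    by (simp add: sum_distrib_left mult.assoc)
  with x(1) show ?thesis
    unfolding tsideal_gen_def by (intro CollectI exI conjI)
qed

lemma tsideal_gen_mult_right:
  assumes "x \<in> tsideal_gen S"
  shows "x * (y::'a::ring_1) \<in> tsideal_gen S"
proof -
  obtain k :: nat and r s t where x: "\<forall>i<k. s i \<in> S" "x = (\<Sum>i<k. r i * s i * t i)"
    using assms unfolding tsideal_gen_def by auto
  then have "x * y = (\<Sum>i<k. r i * s i * (t i * y))"
    by (simp add: sum_distrib_right mult.assoc)
  with x(1) show ?thesis
    unfolding tsideal_gen_def by (intro CollectI exI conjI)
qed

lemma inverse_of_two_central:
  assumes "2 * h = (1::'a::ring_1)" and "h * 2 = 1"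
  shows "x * h = h * x"
proof -
  have two_central: "2 * y = y * (2::'a)" for y
    by (simp add: mult_2 mult_2_right)
  have "x * h = (h * 2) * (x * h)"
    using assms by simp
  also have "\<dots> = h * ((x * h) * 2)"
    by (simp add: mult.assoc two_central[of "x * h"])
  finally show ?thesis
    by (simp add: mult.assoc assms)
qed

lemma half_one_plus_times_one_minus:
  assumes h: "2 * h = (1::'a::ring_1)" "h * 2 = 1"
  shows "h * (1 + a) * (1 - h * (1 + a)) = h * h * (1 - a\<^sup>2)"
proof -
  have "1 - h * (1 + a) = h * 2 - h * (1 + a)"
    by (simp add: h(2))
  also have "\<dots> = h * (2 - (1 + a))"
    by (simp only: right_diff_distrib)
  also have "\<dots> = h * (1 - a)"
    by (simp add: algebra_simps mult_2_right)
  finally have "h * (1 + a) * (1 - h * (1 + a)) = h * ((1 + a) * h) * (1 - a)"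
    by (simp add: mult.assoc)
  also have "\<dots> = h * h * ((1 + a) * (1 - a))"
    by (simp add: inverse_of_two_central[OF h, of "1 + a"] mult.assoc)
  finally show ?thesis
    by (simp add: algebra_simps power2_eq_square)
qed

lemma regular_idem_lift:
  fixes q :: "'a::ring_1"
  assumes reg: "regular_ring TYPE('a)"
  shows "\<exists>p z. p * p = p \<and> p = q - q * (1 - q) * z"
proof -
  obtain z where z: "(1 - q) * z * (1 - q) = 1 - q"
    using reg unfolding regular_ring_def by metis
  define f where "f = (1 - q) * z"
  have "f * f = ((1 - q) * z * (1 - q)) * z"
    by (simp add: f_def mult.assoc)
  then have "f * f = f"
    by (simp add: z f_def)
  then have one_minus_f: "(1 - f) * (1 - f) = 1 - f"
    by (simp add: algebra_simps)
  have "(1 - f) * (1 - q) = 0"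
    by (simp add: f_def left_diff_distrib[of 1 "(1 - q) * z"] z)
  then have fq: "(1 - f) * q = 1 - f"
    by (simp add: right_diff_distrib)
  have "(q * (1 - f)) * (q * (1 - f)) = q * (1 - f)"
    by (simp add: mult.assoc mult_assoc_eq[OF fq] one_minus_f)
  moreover have "q * (1 - f) = q - q * (1 - q) * z"
    by (simp add: f_def right_diff_distrib[of q 1 "(1 - q) * z"] mult.assoc)
  ultimately show ?thesis
    by metis
qed

text \<open>
  With \<open>h = 1/2\<close>, the element \<open>q = h (1 + a)\<close> is idempotent modulo the ideal generated by
  \<open>q (1 - q) = h\<^sup>2 (1 - a\<^sup>2)\<close>; lift it to an idempotent \<open>p\<close>.\<close>

lemma exists_idem_involution_congruent:
  fixes a :: "'a::ring_1"
  assumes reg: "regular_ring TYPE('a)" and two: "unit_elem (2::'a)"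
  shows "\<exists>p. p * p = p \<and> a - (2 * p - 1) \<in> tsideal_gen {1 - a\<^sup>2}"
proof -
  obtain h where h: "2 * h = (1::'a)" "h * 2 = 1"
    using two unfolding unit_elem_def by blast
  define q where "q = h * (1 + a)"
  obtain p z where pp: "p * p = p" and p: "p = q - q * (1 - q) * z"
    using regular_idem_lift[OF reg] by blast
  have "2 * p - 1 = 2 * q - 1 - 2 * (q * (1 - q) * z)"
    by (simp add: p algebra_simps)
  also have "2 * q = 1 + a"
    by (simp add: q_def mult.assoc[symmetric] h(1))
  also have "2 * (q * (1 - q) * z) = h * (1 - a\<^sup>2) * z"
    by (simp add: q_def half_one_plus_times_one_minus[OF h] mult.assoc[symmetric] h(1))
  finally have "a - (2 * p - 1) = h * (1 - a\<^sup>2) * z"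
    by simp
  moreover have "h * (1 - a\<^sup>2) * z \<in> tsideal_gen {1 - a\<^sup>2}"
    by (intro tsideal_gen_mult_left tsideal_gen_mult_right tsideal_gen_mem) simp
  ultimately show ?thesis
    using pp by auto
qed

lemma regular_idem_absorbing_corner:
  fixes x p :: "'a::ring_1"
  assumes reg: "regular_ring TYPE('a)" and pp: "p * p = p"
  shows "\<exists>r g. g = r * x * p \<and> g * g = g \<and> p * g = g \<and> g * p = g \<and> x * g = x * p"
proof -
  obtain y where y: "x * p * y * (x * p) = x * p"
    using reg unfolding regular_ring_def by metis
  have "(p * y * x * p) * (p * y * x * p) = p * y * (x * p * y * (x * p))"
    using pp by (simp add: mult.assoc mult_assoc_eq[OF pp])
  moreover have "p * (p * y * x * p) = p * y * x * p" "(p * y * x * p) * p = p * y * x * p"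
    by (simp_all add: mult.assoc mult_assoc_eq[OF pp] pp)
  moreover have "x * (p * y * x * p) = x * p * y * (x * p)"
    by (simp add: mult.assoc)
  ultimately show ?thesis
    using y by (intro exI[of _ "p * y"] exI[of _ "p * y * x * p"]) (simp add: mult.assoc)
qed

lemma regular_idem_absorbing:
  fixes x p :: "'a::ring_1"
  assumes reg: "regular_ring TYPE('a)" and x: "x \<in> tsideal_gen S" and pp: "p * p = p"
  shows "\<exists>g. g * g = g \<and> p * g = g * p \<and> x * g = x \<and> g \<in> tsideal_gen S"
proof -
  have qq: "(1 - p) * (1 - p) = 1 - p"
    using pp by (simp add: algebra_simps)
  obtain r g1 where g1: "g1 = r * x * p" "g1 * g1 = g1" "p * g1 = g1" "g1 * p = g1" "x * g1 = x * p"
    using regular_idem_absorbing_corner[OF reg pp] by blast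
  obtain r' g2 where g2: "g2 = r' * x * (1 - p)" "g2 * g2 = g2" "(1 - p) * g2 = g2" "g2 * (1 - p) = g2"
    "x * g2 = x * (1 - p)"
    using regular_idem_absorbing_corner[OF reg qq] by blast
  have pg2: "p * g2 = 0" "g2 * p = 0"
    using g2(3,4) pp by (auto simp: algebra_simps)
  then have "g1 * g2 = 0" "g2 * g1 = 0"
    by (metis g1(3,4) mult.assoc mult_zero_left mult_zero_right)+
  then have "(g1 + g2) * (g1 + g2) = g1 + g2"
    by (simp add: algebra_simps g1(2) g2(2))
  moreover have "p * (g1 + g2) = (g1 + g2) * p"
    by (simp add: distrib_left distrib_right g1(3,4) pg2)
  moreover have "x * (g1 + g2) = x"
    by (simp add: distrib_left g1(5) g2(5) right_diff_distrib)
  moreover have "g1 + g2 \<in> tsideal_gen S"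
    unfolding g1(1) g2(1) by (intro tsideal_gen_add tsideal_gen_mult_left tsideal_gen_mult_right x)
  ultimately show ?thesis
    by blast
qed

section \<open>Idempotents in a corner of a regular ring\<close>

lemma regular_idem_meet:
  fixes i k :: "'a::ring_1"
  assumes reg: "regular_ring TYPE('a)" and ii: "i * i = i" and kk: "k * k = k"
  shows "\<exists>w. w * w = w \<and> i * w = w \<and> k * w = w \<and> (\<forall>z. i * z = z \<longrightarrow> k * z = z \<longrightarrow> w * z = z)"
proof -
  define c where "c = (1 - k) * i"
  obtain c' where c': "c * c' * c = c"
    using reg unfolding regular_ring_def by metis
  define v where "v = i * (1 - c' * c)"
  obtain v' where v': "v * v' * v = v"
    using reg unfolding regular_ring_def by metis
  have iv: "i * v = v"
    by (simp add: v_def mult_assoc_eq[OF ii])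
  have "(1 - k) * v = c - c * c' * c"
    by (simp add: v_def c_def right_diff_distrib mult.assoc)
  then have kv: "k * v = v"
    using c' by (simp add: left_diff_distrib)
  have "(v * v') * (v * v') = v * v'"
    by (simp add: v' flip: mult.assoc)
  moreover have "i * (v * v') = v * v'" "k * (v * v') = v * v'"
    by (simp_all add: mult.assoc[symmetric] iv kv)
  moreover have "v * v' * z = z" if iz: "i * z = z" and kz: "k * z = z" for z
  proof -
    have "c * z = 0"
      by (simp add: c_def mult.assoc iz left_diff_distrib kz)
    moreover have "v * z = i * z - i * (c' * (c * z))"
      by (simp add: v_def right_diff_distrib left_diff_distrib mult.assoc)
    ultimately have vz: "v * z = z"
      by (simp add: iz)
    have "v * v' * z = v * v' * v * z"
      by (simp add: vz mult.assoc)
    also have "\<dots> = z"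
      by (simp add: v' vz)
    finally show ?thesis .
  qed
  ultimately show ?thesis
    by blast
qed

lemma orthogonalize_idem:
  fixes e f :: "'a::ring_1"
  assumes ee: "e * e = e" and ff: "f * f = f" and fe: "f * e = 0"
  shows "(e - e * f) * (e - e * f) = e - e * f" and "(e - e * f) * f = 0" and "f * (e - e * f) = 0"
    and "e * (e - e * f) = e - e * f" and "(e - e * f) * e = e"
proof -
  have efe: "e * f * e = 0"
    by (simp add: mult.assoc fe)
  show "(e - e * f) * f = 0" "f * (e - e * f) = 0" "e * (e - e * f) = e - e * f" "(e - e * f) * e = e"
    by (simp_all add: algebra_simps ee ff fe efe mult_assoc_eq[OF ee] mult_assoc_eq[OF fe] mult.assoc)
  have "(e - e * f) * (e - e * f) = (e - e * f) * e - (e - e * f) * e * f"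
    by (simp add: right_diff_distrib mult.assoc)
  with \<open>(e - e * f) * e = e\<close> show "(e - e * f) * (e - e * f) = e - e * f"
    by simp
qed

lemma disjoint_left_injective:
  fixes g e f :: "'a::ring_1"
  assumes disjoint: "\<forall>r s. e * r = f * s \<longrightarrow> f * s = 0" and gf: "g * f = f"
  shows "(g - e) * (f * r) = 0 \<Longrightarrow> f * r = 0"
  using disjoint by (simp add: left_diff_distrib mult_assoc_eq[OF gf]) (metis mult.assoc)

text \<open>
  As \<open>e R \<inter> f R = 0\<close>, left multiplication by \<open>g - e\<close> is injective on \<open>f R\<close>; inverting
  \<open>c = (g - e) f\<close> on its image yields an idempotent generating \<open>f R\<close> and killing \<open>e\<close>.\<close>

lemma regular_complement_idem:
  fixes g e f :: "'a::ring_1"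
  assumes reg: "regular_ring TYPE('a)"
    and gg: "g * g = g" and ee: "e * e = e" and ff: "f * f = f"
    and ge: "g * e = e" and eg: "e * g = e" and gf: "g * f = f" and fg: "f * g = f"
    and disjoint: "\<forall>r s. e * r = f * s \<longrightarrow> f * s = 0"
  shows "\<exists>f1. f1 * f1 = f1 \<and> f1 * e = 0 \<and> f * f1 = f1 \<and> f1 * f = f \<and> g * f1 = f1 \<and> f1 * g = f1"
proof -
  define c where "c = (g - e) * f"
  obtain c' where "c * c' * c = c"
    using reg unfolding regular_ring_def by metis
  then have ccc: "c * (c' * c) = c"
    by (simp add: mult.assoc)
  have cg: "c * g = c"
    by (simp add: c_def mult.assoc fg)
  have "c * (g - c' * c) = 0"
    by (simp add: right_diff_distrib cg ccc)
  then have "(g - e) * (f * (g - c' * c)) = 0"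
    by (simp add: c_def mult.assoc)
  then have "f * (g - c' * c) = 0"
    by (rule disjoint_left_injective[OF disjoint gf])
  then have fcc: "f * (c' * c) = f"
    by (simp add: right_diff_distrib fg)
  define D where "D = c * c' * (g - e)"
  define f1 where "f1 = f * c' * D"
  have De: "D * e = 0"
    by (simp add: D_def mult.assoc left_diff_distrib ge ee)
  have Df: "D * f = c"
    by (simp add: D_def mult.assoc c_def[symmetric] ccc)
  have Dg: "D * g = D"
    by (simp add: D_def mult.assoc left_diff_distrib gg eg)
  have f1f: "f1 * f = f"
    by (simp add: f1_def mult.assoc Df fcc)
  have "f1 * f1 = (f1 * f) * c' * D"
    by (simp add: f1_def mult.assoc)
  also have "\<dots> = f * c' * D"
    by (simp only: f1f)
  finally have "f1 * f1 = f1"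
    by (simp add: f1_def)
  moreover have "f1 * e = 0" "f * f1 = f1" "g * f1 = f1" "f1 * g = f1"
    by (simp_all add: f1_def mult.assoc De Dg mult_assoc_eq[OF ff] mult_assoc_eq[OF gf])
  ultimately show ?thesis
    using f1f by blast
qed

lemma regular_orthogonal_idems:
  fixes g e f :: "'a::ring_1"
  assumes reg: "regular_ring TYPE('a)"
    and gg: "g * g = g" and ee: "e * e = e" and ff: "f * f = f"
    and ge: "g * e = e" and eg: "e * g = e" and gf: "g * f = f" and fg: "f * g = f"
    and disjoint: "\<forall>r s. e * r = f * s \<longrightarrow> f * s = 0"
  shows "\<exists>e1 f1. e1 * e1 = e1 \<and> f1 * f1 = f1 \<and> e1 * f1 = 0 \<and> f1 * e1 = 0 \<and> g * e1 = e1 \<and> e1 * g = e1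
     \<and> g * f1 = f1 \<and> f1 * g = f1 \<and> e * e1 = e1 \<and> e1 * e = e \<and> f * f1 = f1 \<and> f1 * f = f"
proof -
  obtain f1 where f1: "f1 * f1 = f1" "f1 * e = 0" "f * f1 = f1" "f1 * f = f" "g * f1 = f1" "f1 * g = f1"
    using regular_complement_idem[OF assms] by blast
  have "g * (e - e * f1) = e - e * f1" "(e - e * f1) * g = e - e * f1"
    by (simp_all add: algebra_simps ge mult_assoc_eq[OF ge] eg mult.assoc f1(6))
  with f1 orthogonalize_idem[OF ee f1(1,2)] show ?thesis
    by blast
qed

lemma regular_meet_complement:
  fixes g i k :: "'a::ring_1"
  assumes reg: "regular_ring TYPE('a)" and ii: "i * i = i" and kk: "k * k = k"
    and gk: "g * k = k" and kg: "k * g = k"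
  shows "\<exists>w k1. w * w = w \<and> i * w = w \<and> k * w = w \<and> (\<forall>z. i * z = z \<longrightarrow> k * z = z \<longrightarrow> w * z = z)
    \<and> k1 * k1 = k1 \<and> g * k1 = k1 \<and> k1 * g = k1 \<and> w * k1 = 0 \<and> k * k1 = k1 \<and> k = w * k + k1
    \<and> (\<forall>r s. i * r = k1 * s \<longrightarrow> k1 * s = 0)"
proof -
  obtain w where ww: "w * w = w" and iw: "i * w = w" and kw: "k * w = w"
    and meet: "\<And>z. i * z = z \<Longrightarrow> k * z = z \<Longrightarrow> w * z = z"
    using regular_idem_meet[OF reg ii kk] by blast
  have gw: "g * w = w"
    by (metis gk kw mult.assoc)
  define k1 where "k1 = k - w * k"
  have "k1 * k1 = k * k - (k * w) * k - w * (k * k) + w * (k * w) * k"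
    by (simp add: k1_def algebra_simps)
  also have "\<dots> = k1"
    by (simp add: kk kw ww k1_def)
  finally have k1k1: "k1 * k1 = k1" .
  have "g * k1 = k1"
    by (simp add: k1_def right_diff_distrib gk gw flip: mult.assoc)
  moreover have "k1 * g = k1"
    by (simp add: k1_def left_diff_distrib kg mult.assoc)
  moreover have wk1: "w * k1 = 0"
    by (simp add: k1_def right_diff_distrib ww flip: mult.assoc)
  moreover have kk1: "k * k1 = k1"
    by (simp add: k1_def right_diff_distrib kk kw flip: mult.assoc)
  moreover have "k1 * s = 0" if "i * r = k1 * s" for r s
  proof -
    have "i * (k1 * s) = k1 * s"
      by (simp add: that[symmetric] mult_assoc_eq[OF ii])
    moreover have "k * (k1 * s) = k1 * s"
      by (simp add: mult_assoc_eq[OF kk1])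
    ultimately have "w * (k1 * s) = k1 * s"
      by (rule meet)
    then show ?thesis
      by (simp add: mult_assoc_eq[OF wk1])
  qed
  ultimately show ?thesis
    using ww iw kw meet k1k1 by (intro exI[of _ w] exI[of _ k1]) (auto simp: k1_def)
qed

text \<open>
  For idempotents \<open>i\<close>, \<open>k\<close> of the corner \<open>g R g\<close>: \<open>e1 R = i R\<close>, \<open>w0 R = i R \<inter> k R\<close>, and \<open>f1\<close> is
  orthogonal to \<open>e1\<close> with \<open>(w0 + f1) R = k R\<close>.\<close>

lemma regular_corner_idem_decomposition:
  fixes g i k :: "'a::ring_1"
  assumes reg: "regular_ring TYPE('a)" and gg: "g * g = g" and ii: "i * i = i" and kk: "k * k = k"
    and gi: "g * i = i" and ig: "i * g = i" and gk: "g * k = k" and kg: "k * g = k"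
  shows "\<exists>e1 f1 w0. e1 * e1 = e1 \<and> f1 * f1 = f1 \<and> e1 * f1 = 0 \<and> f1 * e1 = 0
    \<and> g * e1 = e1 \<and> e1 * g = e1 \<and> g * f1 = f1 \<and> f1 * g = f1 \<and> i * e1 = e1 \<and> e1 * i = i
    \<and> k * f1 = f1 \<and> w0 * w0 = w0 \<and> k * w0 = w0 \<and> e1 * w0 = w0 \<and> w0 * e1 = w0 \<and> k = (w0 + f1) * k
    \<and> (\<forall>z. i * z = z \<longrightarrow> k * z = z \<longrightarrow> w0 * z = z)"
proof -
  obtain w k1 where ww: "w * w = w" and iw: "i * w = w" and kw: "k * w = w"
    and meet: "\<And>z. i * z = z \<Longrightarrow> k * z = z \<Longrightarrow> w * z = z"
    and k1k1: "k1 * k1 = k1" and gk1: "g * k1 = k1" and k1g: "k1 * g = k1" and kk1: "k * k1 = k1"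
    and k_split: "k = w * k + k1" and disjoint: "\<forall>r s. i * r = k1 * s \<longrightarrow> k1 * s = 0"
    using regular_meet_complement[OF reg ii kk gk kg] by blast
  then obtain e1 f1 where o: "e1 * e1 = e1" "f1 * f1 = f1" "e1 * f1 = 0" "f1 * e1 = 0" "g * e1 = e1"
    "e1 * g = e1" "g * f1 = f1" "f1 * g = f1" "i * e1 = e1" "e1 * i = i" "k1 * f1 = f1" "f1 * k1 = k1"
    using regular_orthogonal_idems[OF reg gg ii k1k1 gi ig gk1 k1g disjoint] by blast
  have e1w: "e1 * w = w"
    by (metis iw o(10) mult.assoc)
  have f1w: "f1 * w = 0"
    by (metis e1w o(4) mult.assoc mult_zero_left)
  have e1k1: "e1 * k1 = 0"
    by (metis o(3,12) mult.assoc mult_zero_left)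
  have w0: "(w * e1) * (w * e1) = w * e1" "e1 * (w * e1) = w * e1" "(w * e1) * e1 = w * e1"
    "k * (w * e1) = w * e1"
    by (simp_all add: mult.assoc mult_assoc_eq[OF e1w] mult_assoc_eq[OF ww] mult_assoc_eq[OF kw] o(1))
  have kf1: "k * f1 = f1"
    by (metis kk1 o(11) mult.assoc)
  have "(w * e1 + f1) * (w * k + k1) = w * k + k1"
    by (simp add: distrib_left distrib_right mult.assoc mult_assoc_eq[OF e1w] mult_assoc_eq[OF ww]
        mult_assoc_eq[OF f1w] e1k1 o(12))
  then have k: "k = (w * e1 + f1) * k"
    by (simp flip: k_split)
  have w0_meet: "w * e1 * z = z" if "i * z = z" "k * z = z" for z
  proof -
    have "e1 * z = z"
      by (metis that(1) o(10) mult.assoc)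
    then show ?thesis
      by (simp add: mult.assoc meet that)
  qed
  show ?thesis
    by (intro exI[of _ e1] exI[of _ f1] exI[of _ "w * e1"] conjI allI impI)
      (simp_all add: o w0 kf1 k[symmetric] w0_meet)
qed

section \<open>The decomposition of \<open>a\<close> along a corner\<close>

text \<open>
  With respect to
  \<open>1 = (1 - g) + g\<close> it is block triangular, \<open>a = a_out + a_mix + a_in\<close>, where \<open>a_out\<close> is a unit
  of \<open>(1 - g) R (1 - g)\<close>.\<close>

locale corner_split =
  fixes a u g :: "'a::ring_1"
  assumes uu: "u * u = 1" and gg: "g * g = g" and u_g_commute: "u * g = g * u"
    and a_compl: "a * (1 - g) = u * (1 - g)"
begin

definition "a_out = u * (1 - g)"
definition "a_mix = (1 - g) * a * g"
definition "a_in = g * a * g"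

lemma gg_assoc: "g * (g * z) = g * z"
  using mult_assoc_eq[OF gg] .

lemma compl_u: "(1 - g) * u = u * (1 - g)"
  by (simp add: algebra_simps u_g_commute)

lemma g_compl: "g * (1 - g) = 0" "(1 - g) * g = 0"
  by (simp_all add: algebra_simps gg)

lemma g_compl_assoc: "g * ((1 - g) * z) = 0" "(1 - g) * (g * z) = 0"
  by (simp_all add: mult_assoc_eq[OF g_compl(1)] mult_assoc_eq[OF g_compl(2)])

lemma compl_idem: "(1 - g) * (1 - g) = 1 - g"
  by (simp add: algebra_simps gg)

lemma a_out_a_out: "a_out * a_out = 1 - g"
proof -
  have "a_out * a_out = u * ((1 - g) * u) * (1 - g)" by (simp add: a_out_def mult.assoc)
  also have "\<dots> = u * u * ((1 - g) * (1 - g))" by (simp add: compl_u mult.assoc)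
  finally show ?thesis by (simp add: uu compl_idem)
qed

lemma a_out_a_out_assoc: "a_out * (a_out * z) = (1 - g) * z"
  using mult_assoc_eq[OF a_out_a_out] .

lemma g_a_out: "g * a_out = 0"
proof -
  have "g * a_out = g * ((1 - g) * u)" by (simp add: a_out_def compl_u)
  then show ?thesis by (simp add: g_compl_assoc )
qed

lemma a_out_g: "a_out * g = 0"
  by (simp add: a_out_def mult.assoc g_compl)

lemma compl_a_out: "(1 - g) * a_out = a_out"
proof -
  have "(1 - g) * a_out = (1 - g) * ((1 - g) * u)" by (simp add: a_out_def compl_u)
  also have "\<dots> = (1 - g) * u" by (simp add: mult.assoc[symmetric] compl_idem)
  finally show ?thesis by (simp add: a_out_def compl_u)
qed

lemma a_out_compl: "a_out * (1 - g) = a_out"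
  by (simp add: a_out_def mult.assoc compl_idem)

lemma g_a_compl: "g * a * (1 - g) = 0"
proof -
  have "g * a * (1 - g) = g * (a * (1 - g))" by (simp add: mult.assoc)
  also have "\<dots> = g * ((1 - g) * u)" by (simp add: a_compl compl_u)
  finally show ?thesis by (simp add: g_compl_assoc)
qed

lemma g_a: "g * a = a_in"
proof -
  have "g * a = g * a * g + g * a * (1 - g)" by (simp add: algebra_simps)
  then show ?thesis by (simp add: g_a_compl a_in_def)
qed

lemma a_decomp: "a = a_out + a_mix + a_in"
proof -
  have "a = (1 - g) * a * (1 - g) + (1 - g) * a * g + g * a * (1 - g) + g * a * g"
    by (simp add: algebra_simps)
  also have "(1 - g) * a * (1 - g) = a_out"
    by (simp add: mult.assoc a_compl a_out_def mult.assoc[symmetric] compl_u compl_idem)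
  finally show ?thesis by (simp add: g_a_compl a_mix_def a_in_def)
qed

lemma g_a_in: "g * a_in = a_in"
  by (simp add: a_in_def mult.assoc[symmetric] gg)

lemma a_in_g: "a_in * g = a_in"
  by (simp add: a_in_def mult.assoc gg)

lemma g_a_mix: "g * a_mix = 0"
  by (simp add: a_mix_def mult.assoc[symmetric] g_compl)

lemma a_mix_g: "a_mix * g = a_mix"
  by (simp add: a_mix_def mult.assoc gg)

lemma compl_a_mix: "(1 - g) * a_mix = a_mix"
  by (simp add: a_mix_def mult.assoc[symmetric] compl_idem)

lemma a_mix_a_out: "a_mix * a_out = 0"
  by (simp add: a_mix_def a_out_def mult.assoc g_compl_assoc flip: compl_u)

lemma a_in_a_out: "a_in * a_out = 0"
  by (simp add: a_in_def a_out_def mult.assoc g_compl_assoc flip: compl_u)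

lemma compl_a: "(1 - g) * a = a_out + a_mix"
  by (subst a_decomp) (simp add: distrib_left compl_a_out compl_a_mix a_in_def mult.assoc[symmetric] g_compl)

lemma a_a_out: "a * a_out = 1 - g"
  by (subst a_decomp) (simp add: distrib_right a_out_a_out a_mix_a_out a_in_a_out)

lemma a_g: "a * g = a_mix + a_in"
  by (subst a_decomp) (simp add: distrib_right a_out_g a_mix_g a_in_g)

lemma a_corner_part: "a * (g - a_out * a_mix) = a_in"
  by (simp add: right_diff_distrib a_g a_a_out compl_a_mix flip: mult.assoc)
end

lemma exists_corner_split:
  fixes a :: "'a::ring_1"
  assumes reg: "regular_ring TYPE('a)" and two: "unit_elem (2::'a)"
  shows "\<exists>u g. corner_split a u g \<and> g \<in> tsideal_gen {1 - a\<^sup>2}"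
proof -
  obtain p where pp: "p * p = p" and ap: "a - (2 * p - 1) \<in> tsideal_gen {1 - a\<^sup>2}"
    using exists_idem_involution_congruent[OF reg two] by blast
  define u where "u = 2 * p - 1"
  have uu: "u * u = 1"
    by (simp add: u_def mult_2 algebra_simps pp)
  have "1 - u * a = (- u) * (a - u)"
    by (simp add: right_diff_distrib uu)
  also have "\<dots> \<in> tsideal_gen {1 - a\<^sup>2}"
    by (rule tsideal_gen_mult_left[OF ap[folded u_def]])
  finally have "1 - u * a \<in> tsideal_gen {1 - a\<^sup>2}" .
  then obtain g where gg: "g * g = g" and pg: "p * g = g * p" and ua_g: "(1 - u * a) * g = 1 - u * a"
    and g: "g \<in> tsideal_gen {1 - a\<^sup>2}"
    using regular_idem_absorbing[OF reg _ pp] by blast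
  have "u * a * (1 - g) = 1 - g"
    using ua_g by (simp add: algebra_simps)
  then have "a * (1 - g) = u * (1 - g)"
    by (metis mult.assoc mult_1_left uu)
  moreover have "u * g = g * u"
    by (simp add: u_def algebra_simps pg mult_2 mult_2_right)
  ultimately have "corner_split a u g"
    using uu gg by unfold_locales
  with g show ?thesis
    by blast
qed

text \<open>
  \<open>x\<close> is an inner inverse of \<open>a_in\<close> in \<open>g R g\<close>, so \<open>a_in x\<close> and \<open>g - x a_in\<close> are idempotents onto
  the image and the kernel of \<open>a_in\<close>; \<open>e1\<close>, \<open>w0\<close>, \<open>f1\<close> are as in
  \<open>regular_corner_idem_decomposition\<close>. Then \<open>d\<close> and \<open>a_in\<close> are mutually inverse isomorphisms
  between \<open>(t + y0) R\<close> and \<open>(t + w0) R = e1 R\<close>.\<close>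

locale corner_decomposition = corner_split +
  fixes x e1 f1 w0 :: "'a::ring_1"
  assumes g_x: "g * x = x" and x_g: "x * g = x" and inner_inverse: "a_in * x * a_in = a_in"
    and e1e1: "e1 * e1 = e1" and f1f1: "f1 * f1 = f1" and e1_f1: "e1 * f1 = 0" and f1_e1: "f1 * e1 = 0"
    and g_e1: "g * e1 = e1" and e1_g: "e1 * g = e1" and g_f1: "g * f1 = f1" and f1_g: "f1 * g = f1"
    and im_e1: "a_in * x * e1 = e1" and e1_im: "e1 * (a_in * x) = a_in * x"
    and ker_f1: "(g - x * a_in) * f1 = f1" and ker_w0: "(g - x * a_in) * w0 = w0"
    and w0w0: "w0 * w0 = w0" and e1_w0: "e1 * w0 = w0" and w0_e1: "w0 * e1 = w0"
    and ker_decomp: "g - x * a_in = (w0 + f1) * (g - x * a_in)"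
    and w0_absorbs: "\<And>z. a_in * x * z = z \<Longrightarrow> (g - x * a_in) * z = z \<Longrightarrow> w0 * z = z"
begin

definition "ker = g - x * a_in"
definition "t = e1 - w0"
definition "y0 = g - e1 - f1"
definition "d = (g - w0 - f1) * x * e1"

lemma a_in_x_a_in: "a_in * (x * a_in) = a_in"
  using inner_inverse by (simp add: mult.assoc)

lemma a_in_ker: "a_in * ker = 0"
  by (simp add: ker_def right_diff_distrib a_in_g a_in_x_a_in)

lemma a_in_ker_assoc: "a_in * (ker * z) = 0"
  using mult_assoc_eq[OF a_in_ker] by simp

lemma a_in_w0: "a_in * w0 = 0"
  using ker_w0 a_in_ker_assoc by (metis ker_def)

lemma a_in_f1: "a_in * f1 = 0"
  using ker_f1 a_in_ker_assoc by (metis ker_def)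

lemma w0_f1: "w0 * f1 = 0"
  by (metis w0_e1 e1_f1 mult.assoc mult_zero_right)

lemma f1_w0: "f1 * w0 = 0"
  by (metis e1_w0 f1_e1 mult.assoc mult_zero_left)

lemma g_w0: "g * w0 = w0"
  by (metis e1_w0 g_e1 mult.assoc)

lemma w0_g: "w0 * g = w0"
  by (metis w0_e1 e1_g mult.assoc)

lemma e1_a_in: "e1 * a_in = a_in"
proof -
  have "e1 * (a_in * x * a_in) = a_in * x * a_in" using e1_im by (simp add: mult.assoc[symmetric])
  then show ?thesis using inner_inverse by simp
qed

lemma f1_a_in: "f1 * a_in = 0"
  by (metis e1_a_in f1_e1 mult.assoc mult_zero_left)

lemma x_a_in: "x * a_in = g - ker"
  by (simp add: ker_def)

lemma compl_w0_f1: "(g - w0 - f1) * (w0 + f1) = 0"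
  by (simp add: algebra_simps g_w0 g_f1 w0w0 f1f1 w0_f1 f1_w0)

lemma d_a_in: "d * a_in = g - w0 - f1"
proof -
  have "d * a_in = (g - w0 - f1) * (x * (e1 * a_in))" by (simp add: d_def mult.assoc)
  also have "\<dots> = (g - w0 - f1) * (g - ker)" by (simp add: e1_a_in x_a_in)
  also have "\<dots> = (g - w0 - f1) * g - (g - w0 - f1) * ((w0 + f1) * ker)"
    by (simp add: right_diff_distrib ker_decomp[folded ker_def, symmetric])
  also have "\<dots> = g - w0 - f1"
    by (simp add: mult.assoc[symmetric] compl_w0_f1) (simp add: algebra_simps gg w0_g f1_g)
  finally show ?thesis .
qed

lemma a_in_d: "a_in * d = e1"
proof -
  have "a_in * (g - w0 - f1) = a_in" by (simp add: algebra_simps a_in_g a_in_w0 a_in_f1)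
  then have "a_in * d = a_in * x * e1" by (simp add: d_def mult.assoc[symmetric])
  then show ?thesis by (simp add: im_e1)
qed

lemma d_e1: "d * e1 = d"
  by (simp add: d_def mult.assoc e1e1)

lemma w0_d: "w0 * d = 0"
proof -
  have "w0 * (g - w0 - f1) = 0" by (simp add: algebra_simps w0_g w0w0 w0_f1)
  then show ?thesis by (simp add: d_def mult.assoc[symmetric])
qed

lemma f1_d: "f1 * d = 0"
proof -
  have "f1 * (g - w0 - f1) = 0" by (simp add: algebra_simps f1_g f1_w0 f1f1)
  then show ?thesis by (simp add: d_def mult.assoc[symmetric])
qed

lemma g_d: "g * d = d"
  by (simp add: d_def mult.assoc[symmetric] right_diff_distrib gg g_w0 g_f1)

lemma d_g: "d * g = d"
  by (simp add: d_def mult.assoc e1_g)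

lemma y0_w0: "y0 * w0 = 0"
  by (simp add: y0_def algebra_simps g_w0 e1_w0 f1_w0)

lemma w0_y0: "w0 * y0 = 0"
  by (simp add: y0_def algebra_simps w0_g w0_e1 w0_f1)

lemma y0_f1: "y0 * f1 = 0"
  by (simp add: y0_def algebra_simps g_f1 e1_f1 f1f1)

lemma f1_y0: "f1 * y0 = 0"
  by (simp add: y0_def algebra_simps f1_g f1_e1 f1f1)

lemma e1_y0: "e1 * y0 = 0"
  by (simp add: y0_def algebra_simps e1_g e1e1 e1_f1)

lemma y0_e1: "y0 * e1 = 0"
  by (simp add: y0_def algebra_simps g_e1 e1e1 f1_e1)

lemma y0_a_in: "y0 * a_in = 0"
  by (simp add: y0_def algebra_simps g_a_in e1_a_in f1_a_in)

lemma g_y0: "g * y0 = y0"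
  by (simp add: y0_def algebra_simps gg g_e1 g_f1)

lemma y0_g: "y0 * g = y0"
  by (simp add: y0_def algebra_simps gg e1_g f1_g)

lemma t_g: "t * g = t"
  by (simp add: t_def left_diff_distrib e1_g w0_g)

lemma tt: "t * t = t"
  by (simp add: t_def algebra_simps e1e1 e1_w0 w0_e1 w0w0)

lemma y0y0: "y0 * y0 = y0"
  by (simp add: y0_def algebra_simps gg g_e1 g_f1 e1_g e1e1 e1_f1 f1_g f1_e1 f1f1)

lemma t_y0: "t * y0 = 0"
  by (simp add: t_def left_diff_distrib e1_y0 w0_y0)

lemma y0_t: "y0 * t = 0"
  by (simp add: t_def right_diff_distrib y0_e1 y0_w0)

lemma t_w0: "t * w0 = 0"
  by (simp add: t_def left_diff_distrib e1_w0 w0w0)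

lemma w0_t: "w0 * t = 0"
  by (simp add: t_def right_diff_distrib w0_e1 w0w0)

lemma t_plus_y0: "t + y0 = g - w0 - f1"
  by (simp add: t_def y0_def)

lemma t_plus_w0: "t + w0 = e1"
  by (simp add: t_def)

lemma a_in_t_plus_y0: "a_in * (t + y0) = a_in"
  by (simp add: t_plus_y0 algebra_simps a_in_g a_in_w0 a_in_f1)

lemma d_t_plus_w0: "d * (t + w0) = d"
  by (simp add: t_plus_w0 d_e1)

text \<open>
  For \<open>z = a y \<in> a r(a\<^sup>2)\<close>, the component \<open>g z\<close> lies in the image of \<open>a_in\<close> and in its kernel, hence
  in \<open>w0 R\<close>; the component \<open>(1 - g) z\<close> is determined by \<open>g z\<close> because \<open>a_out\<close> is invertible.\<close>

lemma a_r_ann_factor: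
  assumes "a * (a * y) = 0"
  shows "a * y = (g - a_out * a_mix) * (w0 * (g * (a * y)))"
proof -
  define z where "z = a * y"
  have az: "a * z = 0"
    using assms by (simp add: z_def)
  have "g * z = a_in * y"
    by (simp add: z_def g_a flip: mult.assoc)
  then have image: "a_in * x * (g * z) = g * z"
    by (simp add: inner_inverse flip: mult.assoc)
  have "a_in * (g * z) = g * (a * z)"
    by (simp add: g_a a_in_g flip: mult.assoc)
  then have kernel: "(g - x * a_in) * (g * z) = g * z"
    by (simp add: az left_diff_distrib gg_assoc mult.assoc)
  have w0_gz: "w0 * (g * z) = g * z"
    by (rule w0_absorbs[OF image kernel])
  have "a_out * z + a_mix * z = 0"
    using az by (simp add: mult.assoc flip: distrib_right compl_a)
  moreover have "a_out * z = a_out * ((1 - g) * z)" "a_mix * z = a_mix * (g * z)"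
    by (simp_all add: a_out_compl a_mix_g flip: mult.assoc)
  ultimately have "a_out * (a_out * ((1 - g) * z) + a_mix * (g * z)) = 0"
    by simp
  then have compl_z: "(1 - g) * z = - (a_out * (a_mix * (g * z)))"
    by (simp add: distrib_left a_out_a_out_assoc mult_assoc_eq[OF compl_idem] eq_neg_iff_add_eq_0)
  have "z = g * z + (1 - g) * z"
    by (simp add: algebra_simps)
  also have "\<dots> = (g - a_out * a_mix) * (g * z)"
    by (subst compl_z) (simp add: left_diff_distrib gg_assoc mult.assoc)
  finally show ?thesis
    using w0_gz by (simp add: z_def)
qed

lemma l_ann_a_y0:
  assumes "y * (a * a) = 0"
  shows "y * a * y0 = y * a"
proof -
  define z where "z = y * a"
  have za: "z * a = 0"
    using assms by (simp add: z_def mult.assoc)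
  have z_compl: "z * (1 - g) = 0"
    by (simp add: za a_a_out[symmetric] flip: mult.assoc)
  then have zg: "z * g = z"
    by (simp add: right_diff_distrib)
  have "z * a_in = z * a * g"
    by (simp add: a_in_def zg flip: mult.assoc)
  then have "z * a_in = 0"
    by (simp add: za)
  then have z_e1: "z * e1 = 0"
    by (metis im_e1 mult.assoc mult_zero_left)
  have "z * a_out = z * (1 - g) * a_out"
    by (simp add: mult.assoc compl_a_out)
  then have z_a_out: "z * a_out = 0"
    by (simp add: z_compl)
  have "ker = g * ker"
    by (simp add: ker_def right_diff_distrib gg g_x flip: mult.assoc)
  also have "\<dots> = (g - a_out * a_mix) * ker + a_out * (a_mix * ker)"
    by (simp add: left_diff_distrib mult.assoc)
  finally have ker_split: "ker = (g - a_out * a_mix) * ker + a_out * (a_mix * ker)" .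
  then have "z * ker = y * (a * (g - a_out * a_mix) * ker) + z * a_out * (a_mix * ker)"
    by (metis z_def distrib_left mult.assoc)
  then have "z * ker = 0"
    by (simp add: a_corner_part a_in_ker z_a_out)
  then have z_f1: "z * f1 = 0"
    by (metis ker_f1 ker_def mult.assoc mult_zero_left)
  show ?thesis
    using zg z_e1 z_f1 by (simp add: z_def[symmetric] y0_def right_diff_distrib)
qed
end

context corner_split
begin

text \<open>\<open>a_out + a_mix\<close> is block triangular with invertible diagonal block \<open>a_out\<close> on \<open>(1 - g) R\<close>.\<close>

lemma unit_elem_if_corner_unit:
  assumes n: "g * n = n" "n * g = n" and m: "g * m = m" "m * g = m"
    and inverse: "n * m = g" "m * n = g"
  shows "unit_elem (a_out + a_mix + n)"
proof -
  have a_out_m: "a_out * m = 0" and m_a_out: "m * a_out = 0" and m_a_mix: "m * a_mix = 0"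
    and a_out_n: "a_out * n = 0" and n_a_out: "n * a_out = 0"
    by (metis m n a_out_g g_a_out g_a_mix mult.assoc mult_zero_left mult_zero_right)+
  define v where "v = a_out + m - a_out * a_mix * m"
  have "(a_out + a_mix + n) * v = a_out * a_out + a_out * m - a_out * a_out * a_mix * m + a_mix * a_out
      + a_mix * m - a_mix * a_out * a_mix * m + n * a_out + n * m - n * a_out * a_mix * m"
    by (simp add: v_def algebra_simps)
  also have "\<dots> = 1"
    by (simp add: a_out_a_out a_out_m a_mix_a_out n_a_out inverse mult.assoc a_out_a_out_assoc compl_a_mix)
  finally have "(a_out + a_mix + n) * v = 1" .
  moreover have "v * (a_out + a_mix + n) = a_out * a_out + a_out * a_mix + a_out * n + m * a_out
      + m * a_mix + m * n - a_out * a_mix * m * a_out - a_out * a_mix * m * a_mix - a_out * a_mix * m * n"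
    by (simp add: v_def algebra_simps)
  moreover have "\<dots> = 1"
    by (simp add: a_out_a_out a_out_n m_a_out m_a_mix inverse mult.assoc a_mix_g)
  ultimately show ?thesis
    unfolding unit_elem_def by metis
qed
end

text \<open>
  Given \<open>y0 R \<cong> w0 R\<close> via \<open>s\<close> and \<open>s'\<close>, the idempotent \<open>e = s' + w0 + f1\<close> makes \<open>a - e\<close> a unit:
  inside the corner, \<open>a_in - e\<close> has the explicit inverse \<open>m\<close>.\<close>

locale clean_witness = corner_decomposition +
  fixes s s' :: "'a::ring_1"
  assumes s_y0: "s * y0 = s" and s'_w0: "s' * w0 = s'" and s'_s: "s' * s = y0" and s_s': "s * s' = w0"
begin

definition "e = s' + w0 + f1"
definition "m = d - d * s - s - f1"

lemma w0_s: "w0 * s = s"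
  by (metis s_y0 s'_s s_s' mult.assoc)

lemma y0_s': "y0 * s' = s'"
  by (metis s'_w0 s'_s s_s' mult.assoc)

lemma s_w0: "s * w0 = 0"
  by (metis s_y0 y0_w0 mult.assoc mult_zero_right)

lemma s_f1: "s * f1 = 0"
  by (metis s_y0 y0_f1 mult.assoc mult_zero_right)

lemma s_a_in: "s * a_in = 0"
  by (metis s_y0 y0_a_in mult.assoc mult_zero_right)

lemma s_g: "s * g = s"
  by (metis s_y0 y0_g mult.assoc)

lemma f1_s: "f1 * s = 0"
  by (metis w0_s f1_w0 mult.assoc mult_zero_left)

lemma e1_s: "e1 * s = s"
  by (metis w0_s e1_w0 mult.assoc)

lemma a_in_s: "a_in * s = 0"
  by (metis w0_s a_in_w0 mult.assoc mult_zero_left)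

lemma g_s: "g * s = s"
  by (metis w0_s g_w0 mult.assoc)

lemma w0_s': "w0 * s' = 0"
  by (metis y0_s' w0_y0 mult.assoc mult_zero_left)

lemma f1_s': "f1 * s' = 0"
  by (metis y0_s' f1_y0 mult.assoc mult_zero_left)

lemma e1_s': "e1 * s' = 0"
  by (metis y0_s' e1_y0 mult.assoc mult_zero_left)

lemma g_s': "g * s' = s'"
  by (metis y0_s' g_y0 mult.assoc)

lemma s'_f1: "s' * f1 = 0"
  by (metis s'_w0 w0_f1 mult.assoc mult_zero_right)

lemma s'_s': "s' * s' = 0"
  by (metis s'_w0 w0_s' mult.assoc mult_zero_right)

lemma s'_g: "s' * g = s'"
  by (metis s'_w0 w0_g mult.assoc)

lemma s'_d: "s' * d = 0"
  by (metis s'_w0 w0_d mult.assoc mult_zero_right)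

lemma d_s': "d * s' = 0"
  by (metis d_e1 e1_s' mult.assoc mult_zero_right)

lemma d_f1: "d * f1 = 0"
  by (metis d_e1 e1_f1 mult.assoc mult_zero_right)

lemma e_idem: "e * e = e"
  by (simp add: e_def algebra_simps s'_s' s'_w0 s'_f1 w0_s' w0w0 w0_f1 f1_s' f1_w0 f1f1)

lemma g_e: "g * e = e" and e_g: "e * g = e"
  by (simp_all add: e_def distrib_left distrib_right g_s' g_w0 g_f1 s'_g w0_g f1_g)

lemma g_m: "g * m = m"
  by (simp add: m_def algebra_simps g_d g_s g_f1 flip: mult.assoc)

lemma m_g: "m * g = m"
  by (simp add: m_def left_diff_distrib d_g mult.assoc s_g f1_g)

lemma a_in_e_m: "(a_in - e) * m = g"
proof -
  have e_d: "e * d = 0" and e_s: "e * s = y0 + s" and e_f1: "e * f1 = f1"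
    by (simp_all add: e_def distrib_right w0_d f1_d s'_d s'_s w0_s f1_s s'_f1 w0_f1 f1f1)
  have "(a_in - e) * m = a_in * d - a_in * d * s - a_in * s - a_in * f1 - e * d + e * d * s + e * s + e * f1"
    by (simp add: m_def algebra_simps)
  also have "\<dots> = g"
    by (simp add: a_in_d e_d e_s e_f1 a_in_s a_in_f1 e1_s y0_def)
  finally show ?thesis .
qed

lemma m_a_in_e: "m * (a_in - e) = g"
proof -
  have "m * (a_in - e) = d * a_in - d * s' - d * w0 - d * f1 - d * s * a_in + d * s * s' + d * s * w0
      + d * s * f1 - s * a_in + s * s' + s * w0 + s * f1 - f1 * a_in + f1 * s' + f1 * w0 + f1 * f1"
    by (simp add: m_def e_def algebra_simps)
  also have "\<dots> = g"
    by (simp add: mult.assoc d_a_in d_s' d_f1 s_a_in s_s' s_w0 s_f1 f1_a_in f1_s' f1_w0 f1f1)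
  finally show ?thesis .
qed

lemma unit_a_minus_e: "unit_elem (a - e)"
proof -
  have "g * (a_in - e) = a_in - e" "(a_in - e) * g = a_in - e"
    by (simp_all add: right_diff_distrib left_diff_distrib g_a_in g_e a_in_g e_g)
  then have "unit_elem (a_out + a_mix + (a_in - e))"
    by (rule unit_elem_if_corner_unit[OF _ _ g_m m_g a_in_e_m m_a_in_e])
  moreover have "a_out + a_mix + (a_in - e) = a - e"
    by (subst (2) a_decomp) simp
  ultimately show ?thesis
    by simp
qed

lemma range_inter_e: "a * r = e * r' \<Longrightarrow> a * r = 0"
proof -
  assume are: "a * r = e * r'"
  have "g * (a * r) = a * r"
    using are g_e by (simp add: mult.assoc[symmetric])
  then have "a * r = a_in * r"
    by (simp add: mult.assoc[symmetric] g_a)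
  then have "e1 * (a * r) = a * r"
    using e1_a_in by (simp add: mult.assoc[symmetric])
  moreover have "e1 * e = w0"
    by (simp add: e_def distrib_left e1_s' e1_w0 e1_f1)
  ultimately have ar_w0: "a * r = w0 * r'"
    using are by (metis mult.assoc)
  have "y0 * e = s'"
    by (simp add: e_def distrib_left y0_s' y0_w0 y0_f1)
  then have "s' * r' = y0 * (a * r)"
    using are by (simp add: mult.assoc[symmetric])
  also have "\<dots> = 0"
    using ar_w0 y0_w0 by (simp add: mult.assoc[symmetric])
  finally have "w0 * r' = 0"
    using s_s' by (metis mult.assoc mult_zero_right)
  with ar_w0 show "a * r = 0"
    by simp
qed

lemma special_clean_a: "special_clean a"
  unfolding special_clean_def idempotent_def
proof (intro exI conjI)
  show "{a * r |r. True} \<inter> {e * r |r. True} = {0}"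
    using range_inter_e by (auto intro: exI[of _ 0])
qed (fact e_idem unit_a_minus_e)+
end

context corner_decomposition
begin

lemma t_in_ideal_of_w0:
  assumes "g \<in> tsideal_gen ((\<lambda>y. a * y) ` r_ann (a\<^sup>2))"
  shows "\<exists>k r s. t = (\<Sum>i<(k::nat). r i * w0 * s i)"
proof -
  obtain k :: nat and r z s where z: "\<forall>i<k. z i \<in> (\<lambda>y. a * y) ` r_ann (a\<^sup>2)"
    and g: "g = (\<Sum>i<k. r i * z i * s i)"
    using assms unfolding tsideal_gen_def by auto
  have "t = (\<Sum>i<k. t * r i * z i * s i)"
    by (subst t_g[symmetric], subst g) (simp add: sum_distrib_left mult.assoc)
  also have "\<dots> = (\<Sum>i<k. (t * r i * (g - a_out * a_mix)) * w0 * (g * (z i * s i)))"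
  proof (rule sum.cong)
    fix i
    assume "i \<in> {..<k}"
    then obtain y where "z i = a * y" "a * (a * y) = 0"
      using z by (auto simp: r_ann_def power2_eq_square mult.assoc)
    then have "z i = (g - a_out * a_mix) * (w0 * (g * z i))"
      using a_r_ann_factor by simp
    then show "t * r i * z i * s i = (t * r i * (g - a_out * a_mix)) * w0 * (g * (z i * s i))"
      by (metis mult.assoc)
  qed simp
  finally show ?thesis
    by (intro exI[of _ k] exI[of _ "\<lambda>i. t * r i * (g - a_out * a_mix)"] exI[of _ "\<lambda>i. g * (z i * s i)"])
qed

lemma t_in_ideal_of_y0:
  assumes "g \<in> tsideal_gen ((\<lambda>y. y * a) ` l_ann (a\<^sup>2))"
  shows "\<exists>k r s. t = (\<Sum>i<(k::nat). r i * y0 * s i)"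
proof -
  obtain k :: nat and r z s where z: "\<forall>i<k. z i \<in> (\<lambda>y. y * a) ` l_ann (a\<^sup>2)"
    and g: "g = (\<Sum>i<k. r i * z i * s i)"
    using assms unfolding tsideal_gen_def by auto
  have "t = (\<Sum>i<k. t * r i * z i * s i)"
    by (subst t_g[symmetric], subst g) (simp add: sum_distrib_left mult.assoc)
  also have "\<dots> = (\<Sum>i<k. (t * r i * z i) * y0 * s i)"
  proof (rule sum.cong)
    fix i
    assume "i \<in> {..<k}"
    then obtain y where "z i = y * a" "y * (a * a) = 0"
      using z by (auto simp: l_ann_def power2_eq_square)
    then have "z i * y0 = z i"
      using l_ann_a_y0 by simp
    then show "t * r i * z i * s i = (t * r i * z i) * y0 * s i"
      by (metis mult.assoc)
  qed simp
  finally show ?thesis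
    by (intro exI[of _ k] exI[of _ "\<lambda>i. t * r i * z i"] exI[of _ s])
qed

lemma special_clean_if_g_in_ideals:
  assumes sep: "separative TYPE('a)"
    and "g \<in> tsideal_gen ((\<lambda>y. a * y) ` r_ann (a\<^sup>2))" and "g \<in> tsideal_gen ((\<lambda>y. y * a) ` l_ann (a\<^sup>2))"
  shows "special_clean a"
proof -
  obtain k r s where t_in_w0: "t = (\<Sum>i<(k::nat). r i * w0 * s i)"
    using t_in_ideal_of_w0 assms(2) by blast
  obtain k' r' s' where t_in_y0: "t = (\<Sum>i<(k'::nat). r' i * y0 * s' i)"
    using t_in_ideal_of_y0 assms(3) by blast
  have "d * a_in = t + y0" "a_in * d = t + w0"
    by (simp_all add: d_a_in t_plus_y0 a_in_d t_plus_w0)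
  then obtain s s' where "s * y0 = s" "s' * w0 = s'" "s' * s = y0" "s * s' = w0"
    using separative_idem_cancel[OF sep tt y0y0 w0w0 t_y0 y0_t t_w0 w0_t a_in_t_plus_y0 d_t_plus_w0 _ _
        t_in_y0 t_in_w0]
    by blast
  then interpret clean_witness a u g x e1 f1 w0 s s'
    by unfold_locales
  show ?thesis
    by (rule special_clean_a)
qed
end

context corner_split
begin

lemma exists_corner_inner_inverse:
  assumes reg: "regular_ring TYPE('a)"
  shows "\<exists>x. g * x = x \<and> x * g = x \<and> a_in * x * a_in = a_in"
proof -
  obtain x0 where x0: "a_in * x0 * a_in = a_in"
    using reg unfolding regular_ring_def by metis
  have "a_in * (g * x0 * g) * a_in = (a_in * g) * x0 * (g * a_in)"
    by (simp add: mult.assoc)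
  then have "a_in * (g * x0 * g) * a_in = a_in"
    by (simp add: a_in_g g_a_in x0)
  moreover have "g * (g * x0 * g) = g * x0 * g" "(g * x0 * g) * g = g * x0 * g"
    by (simp_all add: mult.assoc gg_assoc gg)
  ultimately show ?thesis
    by blast
qed

lemma exists_corner_decomposition:
  assumes reg: "regular_ring TYPE('a)"
  shows "\<exists>x e1 f1 w0. corner_decomposition a u g x e1 f1 w0"
proof -
  obtain x where g_x: "g * x = x" and x_g: "x * g = x" and inner_inverse: "a_in * x * a_in = a_in"
    using exists_corner_inner_inverse[OF reg] by blast
  have image: "(a_in * x) * (a_in * x) = a_in * x" "g * (a_in * x) = a_in * x" "(a_in * x) * g = a_in * x"
    by (simp_all add: inner_inverse g_a_in flip: mult.assoc) (simp add: x_g mult.assoc)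
  have "x * a_in * g = x * a_in" "x * a_in * (x * a_in) = x * a_in"
    using inner_inverse by (simp_all add: mult.assoc a_in_g)
  then have kernel: "(g - x * a_in) * (g - x * a_in) = g - x * a_in"
    "g * (g - x * a_in) = g - x * a_in" "(g - x * a_in) * g = g - x * a_in"
    by (simp_all add: algebra_simps gg g_x flip: mult.assoc)
  obtain e1 f1 w0 where "e1 * e1 = e1 \<and> f1 * f1 = f1 \<and> e1 * f1 = 0 \<and> f1 * e1 = 0
    \<and> g * e1 = e1 \<and> e1 * g = e1 \<and> g * f1 = f1 \<and> f1 * g = f1 \<and> a_in * x * e1 = e1 \<and> e1 * (a_in * x) = a_in * x
    \<and> (g - x * a_in) * f1 = f1 \<and> w0 * w0 = w0 \<and> (g - x * a_in) * w0 = w0 \<and> e1 * w0 = w0 \<and> w0 * e1 = w0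
    \<and> g - x * a_in = (w0 + f1) * (g - x * a_in)
    \<and> (\<forall>z. a_in * x * z = z \<longrightarrow> (g - x * a_in) * z = z \<longrightarrow> w0 * z = z)"
    using regular_corner_idem_decomposition[OF reg gg image(1) kernel(1) image(2,3) kernel(2,3)] by blast
  then have "corner_decomposition a u g x e1 f1 w0"
    using g_x x_g inner_inverse by unfold_locales auto
  then show ?thesis
    by blast
qed
end

theorem corollary3p8:
  fixes a :: "'a::ring_1"
  assumes "separative TYPE('a)"
    and "regular_ring TYPE('a)"
    and "unit_elem (2::'a)"
    and "tsideal_gen ((\<lambda>y. a * y) ` r_ann (a^2)) = tsideal_gen ((\<lambda>y. y * a) ` l_ann (a^2))"
    and "tsideal_gen ((\<lambda>y. y * a) ` l_ann (a^2)) = tsideal_gen {1 - a^2}"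
  shows "special_clean a"
proof -
  obtain u g where split: "corner_split a u g" and g: "g \<in> tsideal_gen {1 - a\<^sup>2}"
    using exists_corner_split[OF assms(2,3)] by blast
  obtain x e1 f1 w0 where "corner_decomposition a u g x e1 f1 w0"
    using corner_split.exists_corner_decomposition[OF split assms(2)] by blast
  moreover have "g \<in> tsideal_gen ((\<lambda>y. a * y) ` r_ann (a\<^sup>2))" "g \<in> tsideal_gen ((\<lambda>y. y * a) ` l_ann (a\<^sup>2))"
    using g assms(4,5) by simp_all
  ultimately show ?thesis
    using corner_decomposition.special_clean_if_g_in_ideals assms(1) by blast
qed
end
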